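(* Let $\theta_1,\theta_2,\dots\ge0$ with $h_n>0$ for all $n$, and suppose $h_{n-1}/h_n\to1$ as $n\to\infty$. Then, under $\mathbb{P}_n$, the random variables $(R_1,R_2,R_3,\dots)$ converge weakly as $n\to\infty$ (in the sense of finite-dimensional distributions) to independent Poisson random variables with respective means $\theta_1,\frac{\theta_2}{2},\frac{\theta_3}{3},\dots$.
   Context: For $\sigma\in\mathcal{S}_n$ (permutations of $\{1,\dots,n\}$), $R_j(\sigma)$ is the number of cycles of length $j$ in $\sigma$. Given nonnegative parameters $\theta_1,\theta_2,\dots$, set $h_0=1$, $h_n=\frac1{n!}\sum_{\sigma\in\mathcal{S}_n}\prod_{j\ge1}\theta_j^{R_j(\sigma)}$, and $\mathbb{P}_n(\sigma)=\frac{1}{n!h_n}\prod_{j\ge1}\theta_j^{R_j(\sigma)}$. *)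

theory Defs
  imports "HOL-Probability.Probability" "HOL-Combinatorics.Combinatorics"
begin

definition cyc_count :: "nat \<Rightarrow> nat \<Rightarrow> (nat \<Rightarrow> nat) \<Rightarrow> nat" where
  "cyc_count n j \<sigma> = card {c \<in> (\<lambda>x. orbit \<sigma> x) ` {1..n}. card c = j}"

text \<open>Weight prod_{j>=1} theta_j^{R_j(sigma)}; R_j = 0 for j > n.\<close>
definition perm_weight :: "(nat \<Rightarrow> real) \<Rightarrow> nat \<Rightarrow> (nat \<Rightarrow> nat) \<Rightarrow> real" where
  "perm_weight \<theta> n \<sigma> = (\<Prod>j\<in>{1..n}. \<theta> j ^ cyc_count n j \<sigma>)"

definition hh :: "(nat \<Rightarrow> real) \<Rightarrow> nat \<Rightarrow> real" where
  "hh \<theta> n = (if n = 0 then 1 else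
      (1 / fact n) * (\<Sum>\<sigma>\<in>{\<sigma>. \<sigma> permutes {1..n}}. perm_weight \<theta> n \<sigma>))"

definition Pn :: "(nat \<Rightarrow> real) \<Rightarrow> nat \<Rightarrow> (nat \<Rightarrow> nat) \<Rightarrow> real" where
  "Pn \<theta> n \<sigma> = perm_weight \<theta> n \<sigma> / (fact n * hh \<theta> n)"

definition En :: "(nat \<Rightarrow> real) \<Rightarrow> nat \<Rightarrow> ((nat \<Rightarrow> nat) \<Rightarrow> real) \<Rightarrow> real" where
  "En \<theta> n F = (\<Sum>\<sigma>\<in>{\<sigma>. \<sigma> permutes {1..n}}. Pn \<theta> n \<sigma> * F \<sigma>)"

definition poisson :: "real \<Rightarrow> nat pmf" where
  "poisson r = (if 0 < r then poisson_pmf r else return_pmf 0)"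

definition cyc_vec :: "nat \<Rightarrow> nat \<Rightarrow> (nat \<Rightarrow> nat) \<Rightarrow> (nat \<Rightarrow> nat)" where
  "cyc_vec m n \<sigma> = (\<lambda>j. if j \<in> {1..m} then cyc_count n j \<sigma> else 0)"

definition poisson_limit :: "(nat \<Rightarrow> real) \<Rightarrow> nat \<Rightarrow> (nat \<Rightarrow> nat) pmf" where
  "poisson_limit \<theta> m = Pi_pmf {1..m} 0 (\<lambda>j. poisson (\<theta> j / real j))"

end

theory Submission
  imports Defs
begin

text \<open>
  The proof computes the law of \<open>(R\<^sub>1, \<dots>, R\<^sub>m)\<close> exactly and then passes to the limit.
  \<^item> Combinatorics: a permutation having a given \<open>j\<close>-set \<open>C\<close> as a cycle is a cyclic
    permutation of \<open>C\<close> (there are \<open>(j-1)!\<close> of them) times a permutation of the rest.  Marking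
    cycles one at a time gives
    \<open>\<bbbP>\<^sub>n(R\<^sub>i = a\<^sub>i, i \<le> m) = \<Prod>\<^sub>i (\<theta>\<^sub>i/i)^{a\<^sub>i}/a\<^sub>i! \<cdot> h'\<^sub>{n-K}/h\<^sub>n\<close>
    with \<open>K = \<Sum> i a\<^sub>i\<close> and \<open>h'\<close> the normalising sequence of the model with
    \<open>\<theta>\<^sub>1 = \<dots> = \<theta>\<^sub>m = 0\<close>.
  \<^item> Analysis: removing the \<open>j\<close>-cycles multiplies the generating function of \<open>h\<close> by
    \<open>exp(-\<theta>\<^sub>j z\<^sup>j/j)\<close>.  From \<open>h\<^sub>{n-1}/h\<^sub>n \<rightarrow> 1\<close> and Tannery's theorem one gets
    \<open>h'\<^sub>{n-K}/h\<^sub>n \<rightarrow> exp(-\<Sum>\<^sub>{i\<le>m} \<theta>\<^sub>i/i)\<close>, so the probabilities above converge to the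
    Poisson probabilities.
  \<^item> Probability: pointwise convergence of the mass functions to a pmf implies convergence of
    the expectations of bounded functions, which is the statement of the theorem.
\<close>

subsection \<open>Cycle types of permutations of a finite set\<close>

definition cycles :: "'a set \<Rightarrow> ('a \<Rightarrow> 'a) \<Rightarrow> 'a set set" where
  "cycles S \<sigma> = (\<lambda>x. orbit \<sigma> x) ` S"

definition cycle_type :: "'a set \<Rightarrow> ('a \<Rightarrow> 'a) \<Rightarrow> nat \<Rightarrow> nat" where
  "cycle_type S \<sigma> j = card {c \<in> cycles S \<sigma>. card c = j}"

definition type_sum :: "'a set \<Rightarrow> ((nat \<Rightarrow> nat) \<Rightarrow> real) \<Rightarrow> real" where
  "type_sum S \<Phi> = (\<Sum>\<sigma>\<in>{\<sigma>. \<sigma> permutes S}. \<Phi> (cycle_type S \<sigma>))"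

lemma in_own_orbit: "\<sigma> permutes S \<Longrightarrow> finite S \<Longrightarrow> x \<in> orbit \<sigma> x"
  by (meson permutation_permutes permutation_self_in_orbit)

lemma cycles_subset: "\<sigma> permutes S \<Longrightarrow> c \<in> cycles S \<sigma> \<Longrightarrow> c \<subseteq> S"
  unfolding cycles_def using permutes_orbit_subset by fastforce

lemma finite_cycles: "finite S \<Longrightarrow> finite (cycles S \<sigma>)"
  unfolding cycles_def by simp

lemma cycle_card_bounds:
  assumes fin: "finite S" and p: "\<sigma> permutes S" and c: "c \<in> cycles S \<sigma>"
  shows "1 \<le> card c" "card c \<le> card S"
proof -
  have sub: "c \<subseteq> S" using cycles_subset[OF p c] .
  obtain x where "c = orbit \<sigma> x" using c by (auto simp: cycles_def)
  hence "c \<noteq> {}" using orbit_nonempty by simp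
  moreover have "finite c" using sub fin finite_subset by blast
  ultimately show "1 \<le> card c" by (simp add: Suc_le_eq card_gt_0_iff)
  show "card c \<le> card S" using sub fin by (rule card_mono[rotated])
qed

lemma cycle_type_large:
  assumes "finite S" "\<sigma> permutes S" "card S < j" shows "cycle_type S \<sigma> j = 0"
proof -
  have "{c \<in> cycles S \<sigma>. card c = j} = {}"
    using cycle_card_bounds(2)[OF assms(1,2)] assms(3) by force
  thus ?thesis unfolding cycle_type_def by (metis card.empty)
qed

lemma cycle_type_le: assumes "finite S" "\<sigma> permutes S" shows "cycle_type S \<sigma> j \<le> card S"
proof -
  have "cycle_type S \<sigma> j \<le> card (cycles S \<sigma>)"
    unfolding cycle_type_def by (rule card_mono[OF finite_cycles[OF assms(1)]]) auto
  also have "\<dots> \<le> card S" unfolding cycles_def by (rule card_image_le[OF assms(1)])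
  finally show ?thesis .
qed

text \<open>The cycles partition \<open>S\<close>, so \<open>\<Sum>\<^sub>j j \<cdot> r\<^sub>j(\<sigma>) = |S|\<close>.\<close>

lemma cycle_type_size:
  assumes fin: "finite S" and p: "\<sigma> permutes S"
  shows "(\<Sum>j\<in>{1..card S}. j * cycle_type S \<sigma> j) = card S"
proof -
  let ?O = "cycles S \<sigma>"
  have cyc: "cyclic_on \<sigma> (orbit \<sigma> x)" for x using cyclic_on_orbit[OF p fin] .
  have disj: "pairwise disjnt ?O"
  proof (rule pairwiseI)
    fix c1 c2 assume "c1 \<in> ?O" "c2 \<in> ?O" "c1 \<noteq> c2"
    then obtain x y where xy: "c1 = orbit \<sigma> x" "c2 = orbit \<sigma> y" by (auto simp: cycles_def)
    show "disjnt c1 c2"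
    proof (rule ccontr)
      assume "\<not> disjnt c1 c2"
      then obtain z where "z \<in> c1" "z \<in> c2" by (auto simp: disjnt_def)
      hence "orbit \<sigma> z = c1" "orbit \<sigma> z = c2" using xy orbit_cyclic_eq3[OF cyc] by metis+
      thus False using \<open>c1 \<noteq> c2\<close> by simp
    qed
  qed
  have U: "\<Union>?O = S"
  proof
    show "\<Union>?O \<subseteq> S" using cycles_subset[OF p] by blast
    show "S \<subseteq> \<Union>?O" using in_own_orbit[OF p fin] unfolding cycles_def by blast
  qed
  have finO: "finite c" if "c \<in> ?O" for c using cycles_subset[OF p that] fin finite_subset by blast
  have "card S = sum card ?O" using card_Union_disjoint[OF disj finO] U by simp
  also have "\<dots> = (\<Sum>j\<in>{1..card S}. \<Sum>c\<in>{c \<in> ?O. card c = j}. card c)"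
  proof (rule sum.group[symmetric])
    show "finite ?O" using finite_cycles[OF fin] .
    show "card ` ?O \<subseteq> {1..card S}" using cycle_card_bounds[OF fin p] by force
  qed simp
  also have "\<dots> = (\<Sum>j\<in>{1..card S}. j * cycle_type S \<sigma> j)"
    unfolding cycle_type_def by (intro sum.cong refl) simp
  finally show ?thesis by simp
qed

text \<open>Conjugating by a bijection \<open>\<pi> : S \<rightarrow> T\<close> maps cycles to cycles of the same size.\<close>

lemma cycle_type_conj:
  assumes bij: "bij_betw \<pi> S T" and p: "\<sigma> permutes S" and fin: "finite S"
  shows "cycle_type T (\<lambda>x. if x \<in> T then \<pi> (\<sigma> (inv_into S \<pi> x)) else x) = cycle_type S \<sigma>"
proof -
  define \<sigma>' where "\<sigma>' = (\<lambda>x. if x \<in> T then \<pi> (\<sigma> (inv_into S \<pi> x)) else x)"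
  have inj: "inj_on \<pi> S" and img: "\<pi> ` S = T" using bij by (auto simp: bij_betw_def)
  have orb: "orbit \<sigma>' (\<pi> a) = \<pi> ` orbit \<sigma> a" if "a \<in> S" for a
  proof -
    have sub: "orbit \<sigma> a \<subseteq> S" using permutes_orbit_subset[OF p that] .
    have "\<pi> ` orbit \<sigma> a = orbit \<sigma>' (\<pi> a)"
    proof (rule orbit_inverse[OF in_own_orbit[OF p fin]])
      fix x assume "x \<in> orbit \<sigma> a"
      hence x: "x \<in> S" using sub by auto
      hence "\<sigma> x \<in> S" using p by (simp add: permutes_in_image)
      thus "\<sigma>' (\<pi> x) = \<pi> (\<sigma> x)" using x inj img by (auto simp: \<sigma>'_def)
    qed
    thus ?thesis by simp
  qed
  have O: "cycles T \<sigma>' = (\<lambda>c. \<pi> ` c) ` cycles S \<sigma>"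
    unfolding cycles_def img[symmetric] image_image using orb by auto
  have "cycle_type T \<sigma>' j = cycle_type S \<sigma> j" for j
  proof -
    have cardeq: "card (\<pi> ` c) = card c" if "c \<in> cycles S \<sigma>" for c
      using inj cycles_subset[OF p that] by (meson card_image inj_on_subset)
    have "{c \<in> cycles T \<sigma>'. card c = j} = (\<lambda>c. \<pi> ` c) ` {c \<in> cycles S \<sigma>. card c = j}"
      unfolding O using cardeq by auto
    moreover have "inj_on (\<lambda>c. \<pi> ` c) {c \<in> cycles S \<sigma>. card c = j}"
      by (rule inj_on_subset[OF inj_on_image_Pow[OF inj]]) (use cycles_subset[OF p] in auto)
    ultimately show ?thesis unfolding cycle_type_def by (simp add: card_image)
  qed
  thus ?thesis unfolding \<sigma>'_def by auto
qed

lemma type_sum_card: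
  assumes "finite S" "finite T" "card S = card T" shows "type_sum S \<Phi> = type_sum T \<Phi>"
proof -
  obtain \<pi> where \<pi>: "bij_betw \<pi> S T" using finite_same_card_bij[OF assms] by blast
  let ?f = "\<lambda>\<sigma> x. if x \<in> T then \<pi> (\<sigma> (inv_into S \<pi> x)) else x"
  have b: "bij_betw ?f {\<sigma>. \<sigma> permutes S} {\<sigma>. \<sigma> permutes T}"
    by (rule bij_betw_permutations[OF \<pi>])
  have "type_sum T \<Phi> = (\<Sum>\<sigma>\<in>{\<sigma>. \<sigma> permutes S}. \<Phi> (cycle_type T (?f \<sigma>)))"
    unfolding type_sum_def using sum.reindex_bij_betw[OF b, of "\<lambda>\<tau>. \<Phi> (cycle_type T \<tau>)"] by simp
  also have "\<dots> = type_sum S \<Phi>" unfolding type_sum_def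
    using cycle_type_conj[OF \<pi> _ assms(1)] by (intro sum.cong) auto
  finally show ?thesis by simp
qed

lemma type_sum_const: "finite S \<Longrightarrow> type_sum S (\<lambda>_. c) = fact (card S) * c"
  unfolding type_sum_def by (simp add: card_permutations)

subsection \<open>Splitting off one cycle\<close>

text \<open>A permutation of \<open>S\<close> having \<open>C\<close> as a cycle is the same thing as a cyclic permutation
  \<open>\<rho>\<close> of \<open>C\<close> together with a permutation \<open>\<tau>\<close> of \<open>S - C\<close>, via \<open>\<sigma> = \<tau> \<circ> \<rho>\<close>.\<close>

definition cyclic_perms :: "'a set \<Rightarrow> ('a \<Rightarrow> 'a) set" where
  "cyclic_perms C = {\<rho>. \<rho> permutes C \<and> cyclic_on \<rho> C}"

definition add_cycles :: "(nat \<Rightarrow> nat) \<Rightarrow> nat \<Rightarrow> nat \<Rightarrow> (nat \<Rightarrow> nat)" where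
  "add_cycles r j a = r(j := r j + a)"

lemma cycles_compose_cycle:
  assumes fin: "finite S" and C: "C \<subseteq> S" "C \<noteq> {}" and rho: "\<rho> permutes C" "cyclic_on \<rho> C"
    and tau: "\<tau> permutes (S - C)"
  shows "cycles S (\<tau> \<circ> \<rho>) = insert C (cycles (S - C) \<tau>)"
    and "C \<notin> cycles (S - C) \<tau>"
proof -
  have on_C: "orbit (\<tau> \<circ> \<rho>) x = C" if "x \<in> C" for x
  proof -
    have r: "\<rho> y \<in> C" if "y \<in> C" for y using rho(1) that by (simp add: permutes_in_image)
    have t: "\<tau> (\<rho> y) = \<rho> y" if "y \<in> C" for y using r[OF that] permutes_not_in[OF tau] by auto
    have "orbit (\<tau> \<circ> \<rho>) x = orbit \<rho> x"
      by (rule orbit_cong0[where A=C]) (use that r t in auto)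
    also have "\<dots> = C" using rho(2) that by (rule orbit_cyclic_eq3)
    finally show ?thesis .
  qed
  have off_C: "orbit (\<tau> \<circ> \<rho>) x = orbit \<tau> x" if "x \<in> S - C" for x
  proof -
    have r: "\<tau> y \<in> S - C" if "y \<in> S - C" for y using permutes_in_image[OF tau] that by blast
    have t: "\<rho> y = y" if "y \<in> S - C" for y using that permutes_not_in[OF rho(1)] by auto
    show ?thesis by (rule orbit_cong0[where A="S - C"]) (use that r t in auto)
  qed
  have "cycles S (\<tau> \<circ> \<rho>) = (\<lambda>x. orbit (\<tau> \<circ> \<rho>) x) ` (C \<union> (S - C))"
    using C(1) by (simp add: cycles_def Un_absorb1)
  also have "\<dots> = (\<lambda>x. orbit (\<tau> \<circ> \<rho>) x) ` C \<union> (\<lambda>x. orbit (\<tau> \<circ> \<rho>) x) ` (S - C)"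
    by (rule image_Un)
  also have "(\<lambda>x. orbit (\<tau> \<circ> \<rho>) x) ` C = (\<lambda>x. C) ` C" by (rule image_cong[OF refl on_C])
  also have "\<dots> = {C}" using C(2) by (simp add: image_constant_conv)
  also have "(\<lambda>x. orbit (\<tau> \<circ> \<rho>) x) ` (S - C) = cycles (S - C) \<tau>"
    unfolding cycles_def by (rule image_cong[OF refl off_C])
  finally show "cycles S (\<tau> \<circ> \<rho>) = insert C (cycles (S - C) \<tau>)" by (simp add: comp_def)
  show "C \<notin> cycles (S - C) \<tau>"
  proof
    assume "C \<in> cycles (S - C) \<tau>"
    then obtain y where y: "y \<in> S - C" "C = orbit \<tau> y" by (auto simp: cycles_def)
    have "y \<in> orbit \<tau> y" using fin by (intro in_own_orbit[OF tau]) auto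
    thus False using y by auto
  qed
qed

lemma cycle_type_compose_cycle:
  assumes fin: "finite S" and C: "C \<subseteq> S" "C \<noteq> {}" and rho: "\<rho> \<in> cyclic_perms C"
    and tau: "\<tau> permutes (S - C)"
  shows "cycle_type S (\<tau> \<circ> \<rho>) = add_cycles (cycle_type (S - C) \<tau>) (card C) 1"
proof -
  have rho': "\<rho> permutes C" "cyclic_on \<rho> C" using rho by (auto simp: cyclic_perms_def)
  note split = cycles_compose_cycle[OF fin C rho' tau]
  have fin': "finite (cycles (S - C) \<tau>)" using fin by (simp add: finite_cycles)
  have "{c \<in> cycles S (\<tau> \<circ> \<rho>). card c = i} =
        (if i = card C then insert C else id) {c \<in> cycles (S - C) \<tau>. card c = i}" for i
    unfolding split(1) by auto
  hence "cycle_type S (\<tau> \<circ> \<rho>) i = cycle_type (S - C) \<tau> i + (if i = card C then 1 else 0)" for i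
    unfolding cycle_type_def using split(2) fin' by simp
  thus ?thesis unfolding add_cycles_def by auto
qed

lemma cyclic_restrict_permutes:
  assumes p: "\<sigma> permutes S" and cyc: "cyclic_on \<sigma> C"
  shows "perm_restrict \<sigma> C permutes C"
proof (rule bij_imp_permutes)
  have "\<sigma> ` C = C"
  proof
    show "\<sigma> ` C \<subseteq> C" using cyc by (auto intro: cyclic_on_inI)
    show "C \<subseteq> \<sigma> ` C"
    proof
      fix y assume y: "y \<in> C"
      have "\<sigma> (inv \<sigma> y) = y" using p by (simp add: permutes_inverses(1))
      moreover hence "inv \<sigma> y \<in> C" using cyclic_on_f_in[OF p cyc] y by simp
      ultimately show "y \<in> \<sigma> ` C" by (metis imageI)
    qed
  qed
  moreover have "inj_on \<sigma> C" using p by (meson permutes_inj_on)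
  ultimately have "bij_betw \<sigma> C C" by (simp add: bij_betw_def)
  thus "bij_betw (perm_restrict \<sigma> C) C C"
    by (rule bij_betw_cong[THEN iffD1, rotated]) (simp add: perm_restrict_def)
  show "\<And>x. x \<notin> C \<Longrightarrow> perm_restrict \<sigma> C x = x" by (simp add: perm_restrict_def)
qed

lemma split_off_cycle_inj:
  "inj_on (\<lambda>(\<rho>, \<tau>). \<tau> \<circ> \<rho>) (cyclic_perms C \<times> {\<tau>. \<tau> permutes (S - C)})"
proof (rule inj_onI, clarsimp simp: cyclic_perms_def)
  fix \<rho> \<tau> \<rho>' \<tau>'
  assume a: "\<rho> permutes C" "\<tau> permutes S - C" "\<rho>' permutes C" "\<tau>' permutes S - C"
    and eq: "\<tau> \<circ> \<rho> = \<tau>' \<circ> \<rho>'"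
  have "\<rho> x = \<rho>' x" for x
  proof (cases "x \<in> C")
    case True
    hence "\<rho> x \<in> C" "\<rho>' x \<in> C" using a by (auto simp: permutes_in_image)
    hence "\<tau> (\<rho> x) = \<rho> x" "\<tau>' (\<rho>' x) = \<rho>' x" using a permutes_not_in by fastforce+
    thus ?thesis using eq by (metis comp_apply)
  next
    case False thus ?thesis using a permutes_not_in by metis
  qed
  hence r: "\<rho> = \<rho>'" by auto
  have "\<tau> x = \<tau>' x" for x
  proof (cases "x \<in> C")
    case True thus ?thesis using a permutes_not_in by (metis Diff_iff)
  next
    case False
    hence "\<rho> x = x" using a permutes_not_in by metis
    thus ?thesis using eq r by (metis comp_apply)
  qed
  thus "\<rho> = \<rho>' \<and> \<tau> = \<tau>'" using r by auto
qed

lemma split_off_cycle_image: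
  assumes fin: "finite S" and C: "C \<subseteq> S" "C \<noteq> {}"
  shows "(\<lambda>(\<rho>, \<tau>). \<tau> \<circ> \<rho>) ` (cyclic_perms C \<times> {\<tau>. \<tau> permutes (S - C)}) =
         {\<sigma>. \<sigma> permutes S \<and> C \<in> cycles S \<sigma>}"
proof
  show "(\<lambda>(\<rho>, \<tau>). \<tau> \<circ> \<rho>) ` (cyclic_perms C \<times> {\<tau>. \<tau> permutes (S - C)}) \<subseteq>
        {\<sigma>. \<sigma> permutes S \<and> C \<in> cycles S \<sigma>}"
  proof clarsimp
    fix \<rho> \<tau> assume a: "\<rho> \<in> cyclic_perms C" "\<tau> permutes S - C"
    have "\<rho> permutes S" using a(1) C(1) by (auto simp: cyclic_perms_def intro: permutes_subset)
    moreover have "\<tau> permutes S" using a(2) by (rule permutes_subset) auto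
    ultimately have "\<tau> \<circ> \<rho> permutes S" by (rule permutes_compose)
    moreover have "C \<in> cycles S (\<tau> \<circ> \<rho>)"
      using cycles_compose_cycle(1)[OF fin C _ _ a(2)] a(1) by (auto simp: cyclic_perms_def)
    ultimately show "\<tau> \<circ> \<rho> permutes S \<and> C \<in> cycles S (\<tau> \<circ> \<rho>)" by simp
  qed
  show "{\<sigma>. \<sigma> permutes S \<and> C \<in> cycles S \<sigma>} \<subseteq>
        (\<lambda>(\<rho>, \<tau>). \<tau> \<circ> \<rho>) ` (cyclic_perms C \<times> {\<tau>. \<tau> permutes (S - C)})"
  proof
    fix \<sigma> assume "\<sigma> \<in> {\<sigma>. \<sigma> permutes S \<and> C \<in> cycles S \<sigma>}"
    then obtain x where p: "\<sigma> permutes S" and x: "x \<in> S" and Cx: "C = orbit \<sigma> x"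
      by (auto simp: cycles_def)
    have cyc: "cyclic_on \<sigma> C" using Cx cyclic_on_orbit[OF p fin] by simp
    let ?\<rho> = "perm_restrict \<sigma> C" and ?\<tau> = "perm_restrict \<sigma> (S - C)"
    have "?\<rho> \<in> cyclic_perms C"
      using cyclic_restrict_permutes[OF p cyc] cyc by (simp add: cyclic_perms_def cyclic_on_perm_restrict)
    moreover have "?\<tau> permutes (S - C)" using p cyc by (rule perm_restrict_diff_cyclic)
    moreover have "?\<tau> \<circ> ?\<rho> = perm_restrict \<sigma> ((S - C) \<union> C)"
      by (rule perm_restrict_comp) (use cyc in auto)
    moreover have "perm_restrict \<sigma> ((S - C) \<union> C) = \<sigma>"
      using p C(1) by (simp add: Un_absorb2)
    ultimately show "\<sigma> \<in> (\<lambda>(\<rho>, \<tau>). \<tau> \<circ> \<rho>) ` (cyclic_perms C \<times> {\<tau>. \<tau> permutes (S - C)})"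
      by (auto intro!: image_eqI[where x="(?\<rho>, ?\<tau>)"])
  qed
qed

lemma sum_permutations_with_cycle:
  assumes fin: "finite S" and C: "C \<subseteq> S" "C \<noteq> {}"
  shows "(\<Sum>\<sigma>\<in>{\<sigma>. \<sigma> permutes S \<and> C \<in> cycles S \<sigma>}. \<Phi> (cycle_type S \<sigma>)) =
         real (card (cyclic_perms C)) * type_sum (S - C) (\<lambda>r. \<Phi> (add_cycles r (card C) 1))"
proof -
  let ?Y = "cyclic_perms C \<times> {\<tau>. \<tau> permutes (S - C)}"
  have "(\<Sum>\<sigma>\<in>{\<sigma>. \<sigma> permutes S \<and> C \<in> cycles S \<sigma>}. \<Phi> (cycle_type S \<sigma>)) =
        (\<Sum>(\<rho>, \<tau>)\<in>?Y. \<Phi> (cycle_type S (\<tau> \<circ> \<rho>)))"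
    unfolding split_off_cycle_image[OF assms, symmetric]
    by (subst sum.reindex[OF split_off_cycle_inj]) (simp add: case_prod_unfold)
  also have "\<dots> = (\<Sum>(\<rho>, \<tau>)\<in>?Y. \<Phi> (add_cycles (cycle_type (S - C) \<tau>) (card C) 1))"
    by (rule sum.cong) (auto simp: cycle_type_compose_cycle[OF fin C])
  also have "\<dots> = real (card (cyclic_perms C)) * type_sum (S - C) (\<lambda>r. \<Phi> (add_cycles r (card C) 1))"
    by (simp add: sum.cartesian_product[symmetric] type_sum_def)
  finally show ?thesis .
qed

lemma cycle_type_indicator_sum:
  assumes fin: "finite S" and p: "\<sigma> permutes S"
  shows "real (cycle_type S \<sigma> j) =
         (\<Sum>C\<in>{C. C \<subseteq> S \<and> card C = j}. if C \<in> cycles S \<sigma> then 1 else 0)"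
proof -
  have sub: "finite {C. C \<subseteq> S \<and> card C = j}"
    by (rule finite_subset[of _ "Pow S"]) (use fin in auto)
  have "{c \<in> cycles S \<sigma>. card c = j} = {C \<in> {C. C \<subseteq> S \<and> card C = j}. C \<in> cycles S \<sigma>}"
    using cycles_subset[OF p] by auto
  thus ?thesis unfolding cycle_type_def using sum.inter_filter[OF sub, of "\<lambda>_. 1::real"] by simp
qed

lemma marked_type_sum:
  assumes fin: "finite S" and j: "j \<ge> 1"
  shows "(\<Sum>\<sigma>\<in>{\<sigma>. \<sigma> permutes S}. real (cycle_type S \<sigma> j) * \<Phi> (cycle_type S \<sigma>)) =
     (\<Sum>C\<in>{C. C \<subseteq> S \<and> card C = j}.
        real (card (cyclic_perms C)) * type_sum (S - C) (\<lambda>r. \<Phi> (add_cycles r j 1)))"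
proof -
  let ?Sub = "{C. C \<subseteq> S \<and> card C = j}" and ?P = "{\<sigma>. \<sigma> permutes S}"
  have "(\<Sum>\<sigma>\<in>?P. real (cycle_type S \<sigma> j) * \<Phi> (cycle_type S \<sigma>)) =
        (\<Sum>\<sigma>\<in>?P. \<Sum>C\<in>?Sub. if C \<in> cycles S \<sigma> then \<Phi> (cycle_type S \<sigma>) else 0)"
    by (rule sum.cong) (auto simp: cycle_type_indicator_sum[OF fin] sum_distrib_right intro!: sum.cong)
  also have "\<dots> = (\<Sum>C\<in>?Sub. \<Sum>\<sigma>\<in>?P. if C \<in> cycles S \<sigma> then \<Phi> (cycle_type S \<sigma>) else 0)"
    by (rule sum.swap)
  also have "\<dots> = (\<Sum>C\<in>?Sub. \<Sum>\<sigma>\<in>{\<sigma>. \<sigma> permutes S \<and> C \<in> cycles S \<sigma>}. \<Phi> (cycle_type S \<sigma>))"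
  proof (rule sum.cong[OF refl])
    fix C
    have "(\<Sum>\<sigma>\<in>?P. if C \<in> cycles S \<sigma> then \<Phi> (cycle_type S \<sigma>) else 0) =
          (\<Sum>\<sigma>\<in>{\<sigma> \<in> ?P. C \<in> cycles S \<sigma>}. \<Phi> (cycle_type S \<sigma>))"
      by (rule sum.inter_filter[OF finite_permutations[OF fin], symmetric])
    also have "{\<sigma> \<in> ?P. C \<in> cycles S \<sigma>} = {\<sigma>. \<sigma> permutes S \<and> C \<in> cycles S \<sigma>}" by auto
    finally show "(\<Sum>\<sigma>\<in>?P. if C \<in> cycles S \<sigma> then \<Phi> (cycle_type S \<sigma>) else 0) =
          (\<Sum>\<sigma>\<in>{\<sigma>. \<sigma> permutes S \<and> C \<in> cycles S \<sigma>}. \<Phi> (cycle_type S \<sigma>))" .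
  qed
  also have "\<dots> = (\<Sum>C\<in>?Sub. real (card (cyclic_perms C)) * type_sum (S - C) (\<lambda>r. \<Phi> (add_cycles r j 1)))"
  proof (intro sum.cong refl)
    fix C assume "C \<in> ?Sub"
    hence C: "C \<subseteq> S" "card C = j" "C \<noteq> {}" using j by auto
    show "(\<Sum>\<sigma>\<in>{\<sigma>. \<sigma> permutes S \<and> C \<in> cycles S \<sigma>}. \<Phi> (cycle_type S \<sigma>)) =
          real (card (cyclic_perms C)) * type_sum (S - C) (\<lambda>r. \<Phi> (add_cycles r j 1))"
      using sum_permutations_with_cycle[OF fin C(1,3)] C(2) by simp
  qed
  finally show ?thesis .
qed

lemma cycle_type_full:
  assumes fin: "finite C" and ne: "C \<noteq> {}" and p: "\<rho> permutes C"
  shows "cycle_type C \<rho> (card C) = (if cyclic_on \<rho> C then 1 else 0)"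
proof (cases "cyclic_on \<rho> C")
  case True
  hence "cycles C \<rho> = {C}" using ne orbit_cyclic_eq3[OF True] by (auto simp: cycles_def)
  hence "{c \<in> cycles C \<rho>. card c = card C} = {C}" by auto
  thus ?thesis using True unfolding cycle_type_def by simp
next
  case False
  have "{c \<in> cycles C \<rho>. card c = card C} = {}"
  proof (rule ccontr)
    assume "{c \<in> cycles C \<rho>. card c = card C} \<noteq> {}"
    then obtain x where x: "x \<in> C" "card (orbit \<rho> x) = card C" by (auto simp: cycles_def)
    have "orbit \<rho> x = C"
      using permutes_orbit_subset[OF p x(1)] x(2) fin by (simp add: card_subset_eq)
    hence "cyclic_on \<rho> C" using x(1) by (metis cyclic_on_singleI)
    thus False using False by simp
  qed
  thus ?thesis using False unfolding cycle_type_def by (metis card.empty)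
qed

text \<open>Consequently the number of cyclic permutations of a set only depends on its size.\<close>

lemma card_cyclic_perms_type_sum:
  assumes fin: "finite C" and ne: "C \<noteq> {}"
  shows "real (card (cyclic_perms C)) = type_sum C (\<lambda>r. real (r (card C)))"
proof -
  have "type_sum C (\<lambda>r. real (r (card C))) =
        (\<Sum>\<rho>\<in>{\<rho>. \<rho> permutes C}. if cyclic_on \<rho> C then 1 else 0)"
    unfolding type_sum_def by (rule sum.cong) (auto simp: cycle_type_full[OF fin ne])
  also have "\<dots> = real (card (cyclic_perms C))"
    using sum.inter_filter[OF finite_permutations[OF fin], of "\<lambda>_. 1::real"]
    by (simp add: cyclic_perms_def conj_commute)
  finally show ?thesis by simp
qed

definition cyclic_count :: "nat \<Rightarrow> real" where
  "cyclic_count j = real (card (cyclic_perms {1..j}))"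

lemma card_cyclic_perms:
  assumes "finite C" "card C = j" "j \<ge> 1"
  shows "real (card (cyclic_perms C)) = cyclic_count j"
proof -
  have "C \<noteq> {}" "{1..j} \<noteq> {}" using assms by auto
  thus ?thesis unfolding cyclic_count_def using assms
    by (simp add: card_cyclic_perms_type_sum type_sum_card[of C "{1..j}"])
qed

text \<open>The marking identity with the choice of \<open>C\<close> counted: all \<open>(|S| choose j)\<close> choices
  contribute the same amount.\<close>

lemma marked_type_sum_count:
  assumes fin: "finite S" and j: "j \<ge> 1"
  shows "(\<Sum>\<sigma>\<in>{\<sigma>. \<sigma> permutes S}. real (cycle_type S \<sigma> j) * \<Phi> (cycle_type S \<sigma>)) =
     real (card S choose j) * cyclic_count j * type_sum {1..card S - j} (\<lambda>r. \<Phi> (add_cycles r j 1))"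
proof -
  have "(\<Sum>\<sigma>\<in>{\<sigma>. \<sigma> permutes S}. real (cycle_type S \<sigma> j) * \<Phi> (cycle_type S \<sigma>)) =
     (\<Sum>C\<in>{C. C \<subseteq> S \<and> card C = j}. cyclic_count j * type_sum {1..card S - j} (\<lambda>r. \<Phi> (add_cycles r j 1)))"
    unfolding marked_type_sum[OF fin j]
  proof (intro sum.cong refl)
    fix C assume "C \<in> {C. C \<subseteq> S \<and> card C = j}"
    hence C: "C \<subseteq> S" "card C = j" by auto
    have finC: "finite C" using C fin finite_subset by blast
    have "type_sum (S - C) (\<lambda>r. \<Phi> (add_cycles r j 1)) = type_sum {1..card S - j} (\<lambda>r. \<Phi> (add_cycles r j 1))"
      by (rule type_sum_card) (use fin C finC in \<open>auto simp: card_Diff_subset\<close>)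
    thus "real (card (cyclic_perms C)) * type_sum (S - C) (\<lambda>r. \<Phi> (add_cycles r j 1)) =
          cyclic_count j * type_sum {1..card S - j} (\<lambda>r. \<Phi> (add_cycles r j 1))"
      using card_cyclic_perms[OF finC C(2) j] by simp
  qed
  also have "\<dots> = real (card S choose j) * cyclic_count j * type_sum {1..card S - j} (\<lambda>r. \<Phi> (add_cycles r j 1))"
    using n_subsets[OF fin, of j] by simp
  finally show ?thesis .
qed

lemma binomial_times_fact_pred:
  assumes j: "1 \<le> j" "j \<le> n"
  shows "real (n choose j) * fact (j - 1) = fact n / (fact (n - j) * real j)"
proof -
  have "fact j * fact (n - j) * real (n choose j) = fact n"
    using binomial_fact_lemma[OF j(2)] by (metis of_nat_fact of_nat_mult)
  moreover have "fact j = real j * fact (j - 1)" using j(1) by (simp add: fact_reduce)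
  ultimately show ?thesis using j(1) by (simp add: field_simps)
qed

text \<open>Counting pairs (permutation, marked cycle) weighted by cycle length gives
  \<open>\<Sum>\<^sub>j j (n choose j) c\<^sub>j (n-j)! = n \<cdot> n!\<close>, which determines \<open>c\<^sub>j = (j-1)!\<close> recursively.\<close>

lemma cyclic_count_sum: "(\<Sum>j\<in>{1..n}. cyclic_count j / fact (j - 1)) = real n"
proof -
  let ?S = "{1..n::nat}" and ?P = "{\<sigma>. \<sigma> permutes {1..n::nat}}"
  have count_j: "(\<Sum>\<sigma>\<in>?P. real (cycle_type ?S \<sigma> j)) = real (n choose j) * cyclic_count j * fact (n - j)"
    if "j \<in> {1..n}" for j
    using marked_type_sum_count[of ?S j "\<lambda>_. 1"] type_sum_const[of "{1..n-j}" 1] that by simp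
  have "fact n * real n = (\<Sum>\<sigma>\<in>?P. \<Sum>j\<in>{1..n}. real j * real (cycle_type ?S \<sigma> j))"
  proof -
    have "(\<Sum>j\<in>{1..n}. real j * real (cycle_type ?S \<sigma> j)) = real n" if "\<sigma> \<in> ?P" for \<sigma>
      using cycle_type_size[of ?S \<sigma>] that by (simp flip: of_nat_mult of_nat_sum)
    thus ?thesis by (simp add: card_permutations)
  qed
  also have "\<dots> = (\<Sum>j\<in>{1..n}. real j * (\<Sum>\<sigma>\<in>?P. real (cycle_type ?S \<sigma> j)))"
    unfolding sum_distrib_left by (rule sum.swap)
  also have "\<dots> = (\<Sum>j\<in>{1..n}. fact n * (cyclic_count j / fact (j - 1)))"
  proof (intro sum.cong refl)
    fix j assume j: "j \<in> {1..n}"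
    have "real (n choose j) * fact (j - 1) * fact (n - j) * real j = fact n"
      using binomial_times_fact_pred[of j n] j by simp
    thus "real j * (\<Sum>\<sigma>\<in>?P. real (cycle_type ?S \<sigma> j)) = fact n * (cyclic_count j / fact (j - 1))"
      unfolding count_j[OF j] by (simp add: field_simps)
  qed
  finally have "fact n * (\<Sum>j\<in>{1..n}. cyclic_count j / fact (j - 1)) = fact n * real n"
    by (simp only: sum_distrib_left)
  thus ?thesis by simp
qed

lemma cyclic_count_eq: "j \<ge> 1 \<Longrightarrow> cyclic_count j = fact (j - 1)"
proof -
  assume "j \<ge> 1"
  then obtain k where k: "j = Suc k" by (metis Suc_le_D One_nat_def)
  have "(\<Sum>j\<in>{1..Suc k}. cyclic_count j / fact (j - 1)) =
        (\<Sum>j\<in>{1..k}. cyclic_count j / fact (j - 1)) + cyclic_count (Suc k) / fact k"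
    by simp
  hence "real (Suc k) = real k + cyclic_count (Suc k) / fact k"
    by (simp only: cyclic_count_sum)
  hence "cyclic_count (Suc k) / fact k = 1" by linarith
  hence "cyclic_count (Suc k) = fact k" by (metis divide_eq_1_iff)
  thus ?thesis using k by simp
qed

text \<open>The weight \<open>\<Prod>\<^sub>j \<theta>\<^sub>j^r\<^sub>j\<close> of a cycle type, and the weighted sum
  \<open>\<Sum>\<^sub>\<sigma> \<theta>^{R(\<sigma>)} \<Psi>(R(\<sigma>))\<close> over all permutations of \<open>{1..n}\<close>; thus
  \<open>weighted_sum \<theta> n \<Psi> = n! h\<^sub>n \<bbbE>\<^sub>n[\<Psi>(R)]\<close>.\<close>

definition type_weight :: "(nat \<Rightarrow> real) \<Rightarrow> nat \<Rightarrow> (nat \<Rightarrow> nat) \<Rightarrow> real" where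
  "type_weight \<theta> N r = (\<Prod>j\<in>{1..N}. \<theta> j ^ r j)"

definition weighted_sum :: "(nat \<Rightarrow> real) \<Rightarrow> nat \<Rightarrow> ((nat \<Rightarrow> nat) \<Rightarrow> real) \<Rightarrow> real" where
  "weighted_sum \<theta> n \<Psi> = type_sum {1..n} (\<lambda>r. type_weight \<theta> n r * \<Psi> r)"

lemma type_weight_split:
  "j \<in> {1..N} \<Longrightarrow> type_weight \<theta> N r = \<theta> j ^ r j * (\<Prod>i\<in>{1..N} - {j}. \<theta> i ^ r i)"
  unfolding type_weight_def by (rule prod.remove) simp

lemma type_weight_add_cycle:
  assumes "j \<in> {1..N}" shows "type_weight \<theta> N (add_cycles r j 1) = \<theta> j * type_weight \<theta> N r"
proof -
  have "(\<Prod>i\<in>{1..N} - {j}. \<theta> i ^ add_cycles r j 1 i) = (\<Prod>i\<in>{1..N} - {j}. \<theta> i ^ r i)"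
    by (rule prod.cong) (auto simp: add_cycles_def)
  thus ?thesis using type_weight_split[OF assms] by (simp add: add_cycles_def)
qed

lemma type_weight_extend:
  assumes "N \<le> M" "\<And>i. N < i \<Longrightarrow> r i = 0" shows "type_weight \<theta> M r = type_weight \<theta> N r"
  unfolding type_weight_def by (rule prod.mono_neutral_left[symmetric]) (use assms in auto)

lemma weighted_sum_cong:
  assumes "\<And>\<sigma>. \<sigma> permutes {1..n} \<Longrightarrow>
    type_weight \<theta> n (cycle_type {1..n} \<sigma>) * \<Psi> (cycle_type {1..n} \<sigma>) =
    type_weight \<theta>' n (cycle_type {1..n} \<sigma>) * \<Psi>' (cycle_type {1..n} \<sigma>)"
  shows "weighted_sum \<theta> n \<Psi> = weighted_sum \<theta>' n \<Psi>'"
  unfolding weighted_sum_def type_sum_def by (rule sum.cong) (use assms in auto)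

lemma weighted_sum_linear:
  "finite A \<Longrightarrow> weighted_sum \<theta> n (\<lambda>r. \<Sum>a\<in>A. F a r) = (\<Sum>a\<in>A. weighted_sum \<theta> n (F a))"
  unfolding weighted_sum_def type_sum_def sum_distrib_left by (rule sum.swap)

lemma weighted_sum_divide: "weighted_sum \<theta> n (\<lambda>r. \<Psi> r / c) = weighted_sum \<theta> n \<Psi> / c"
  unfolding weighted_sum_def type_sum_def by (simp add: sum_divide_distrib)

lemma weighted_sum_mark_one:
  assumes j: "1 \<le> j" "j \<le> n"
  shows "weighted_sum \<theta> n (\<lambda>r. real (r j) * \<Psi> r) =
         \<theta> j * (fact n / (fact (n - j) * j)) * weighted_sum \<theta> (n - j) (\<lambda>r. \<Psi> (add_cycles r j 1))"
proof -
  let ?\<Phi> = "\<lambda>r. type_weight \<theta> n r * \<Psi> r"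
  have "weighted_sum \<theta> n (\<lambda>r. real (r j) * \<Psi> r) =
        (\<Sum>\<sigma>\<in>{\<sigma>. \<sigma> permutes {1..n}}. real (cycle_type {1..n} \<sigma> j) * ?\<Phi> (cycle_type {1..n} \<sigma>))"
    unfolding weighted_sum_def type_sum_def by (rule sum.cong) auto
  also have "\<dots> = real (n choose j) * cyclic_count j * type_sum {1..n - j} (\<lambda>r. ?\<Phi> (add_cycles r j 1))"
    using marked_type_sum_count[of "{1..n}" j ?\<Phi>] j by simp
  also have "type_sum {1..n - j} (\<lambda>r. ?\<Phi> (add_cycles r j 1)) =
             \<theta> j * weighted_sum \<theta> (n - j) (\<lambda>r. \<Psi> (add_cycles r j 1))"
    unfolding weighted_sum_def type_sum_def sum_distrib_left
  proof (rule sum.cong[OF refl])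
    fix \<tau> assume "\<tau> \<in> {\<tau>. \<tau> permutes {1..n - j}}"
    hence "\<And>i. n - j < i \<Longrightarrow> cycle_type {1..n - j} \<tau> i = 0"
      using cycle_type_large[of "{1..n - j}" \<tau>] by simp
    hence "type_weight \<theta> n (cycle_type {1..n - j} \<tau>) = type_weight \<theta> (n - j) (cycle_type {1..n - j} \<tau>)"
      by (intro type_weight_extend) auto
    thus "?\<Phi> (add_cycles (cycle_type {1..n - j} \<tau>) j 1) =
          \<theta> j * (type_weight \<theta> (n - j) (cycle_type {1..n - j} \<tau>) *
                  \<Psi> (add_cycles (cycle_type {1..n - j} \<tau>) j 1))"
      using type_weight_add_cycle[of j n \<theta>] j by simp
  qed
  also have "real (n choose j) * cyclic_count j = fact n / (fact (n - j) * j)"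
    using binomial_times_fact_pred[OF j] cyclic_count_eq[OF j(1)] by simp
  finally show ?thesis by simp
qed

lemma weighted_sum_no_cycles:
  assumes j: "1 \<le> j"
  shows "weighted_sum \<theta> n (\<lambda>r. (if r j = 0 then 1 else 0) * \<Psi> r) = weighted_sum (\<theta>(j := 0)) n \<Psi>"
proof (rule weighted_sum_cong)
  fix \<sigma> assume p: "\<sigma> permutes {1..n}"
  let ?r = "cycle_type {1..n} \<sigma>"
  have "type_weight \<theta> n ?r * (if ?r j = 0 then 1 else 0) = type_weight (\<theta>(j := 0)) n ?r"
  proof (cases "j \<le> n")
    case True
    hence jn: "j \<in> {1..n}" using j by auto
    have "(\<Prod>i\<in>{1..n} - {j}. (\<theta>(j := 0)) i ^ ?r i) = (\<Prod>i\<in>{1..n} - {j}. \<theta> i ^ ?r i)"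
      by (rule prod.cong) auto
    thus ?thesis using type_weight_split[OF jn, of \<theta>] type_weight_split[OF jn, of "\<theta>(j := 0)"]
      by (cases "?r j = 0") auto
  next
    case False
    hence "?r j = 0" using cycle_type_large[OF _ p] by simp
    moreover have "type_weight (\<theta>(j := 0)) n ?r = type_weight \<theta> n ?r"
      unfolding type_weight_def using False by (intro prod.cong) auto
    ultimately show ?thesis by simp
  qed
  thus "type_weight \<theta> n ?r * ((if ?r j = 0 then 1 else 0) * \<Psi> ?r) = type_weight (\<theta>(j := 0)) n ?r * \<Psi> ?r"
    by (metis mult.assoc)
qed

text \<open>Exactly \<open>b + 1\<close> cycles of length \<open>j\<close>: mark one of them and divide by \<open>b + 1\<close>.\<close>

lemma weighted_sum_mark_count_step:
  assumes j: "1 \<le> j" "j \<le> n"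
  shows "weighted_sum \<theta> n (\<lambda>r. (if r j = Suc b then 1 else 0) * \<Psi> r) =
    \<theta> j * (fact n / (fact (n - j) * j)) / Suc b *
    weighted_sum \<theta> (n - j) (\<lambda>r. (if r j = b then 1 else 0) * \<Psi> (add_cycles r j 1))"
proof -
  have "weighted_sum \<theta> n (\<lambda>r. (if r j = Suc b then 1 else 0) * \<Psi> r) =
        weighted_sum \<theta> n (\<lambda>r. real (r j) * ((if r j = Suc b then 1 else 0) * \<Psi> r / Suc b))"
    by (rule weighted_sum_cong) auto
  also have "\<dots> = \<theta> j * (fact n / (fact (n - j) * real j)) *
      weighted_sum \<theta> (n - j) (\<lambda>r. (if r j = b then 1 else 0) * \<Psi> (add_cycles r j 1) / Suc b)"
    by (subst weighted_sum_mark_one[OF j]) (simp add: add_cycles_def)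
  finally show ?thesis by (simp add: weighted_sum_divide)
qed

lemma weighted_sum_mark_count:
  assumes j: "1 \<le> j"
  shows "weighted_sum \<theta> n (\<lambda>r. (if r j = a then 1 else 0) * \<Psi> r) =
    (if j * a \<le> n then ((\<theta> j / j) ^ a / fact a) * (fact n / fact (n - j * a)) *
        weighted_sum (\<theta>(j := 0)) (n - j * a) (\<lambda>r. \<Psi> (add_cycles r j a)) else 0)"
proof (induction a arbitrary: n \<Psi>)
  case 0
  have "(\<lambda>r. \<Psi> (add_cycles r j 0)) = \<Psi>" by (simp add: add_cycles_def)
  thus ?case using weighted_sum_no_cycles[OF j] by simp
next
  case (Suc b)
  show ?case
  proof (cases "j \<le> n")
    case False
    hence "cycle_type {1..n} \<sigma> j = 0" if "\<sigma> permutes {1..n}" for \<sigma>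
      using cycle_type_large[OF _ that] by simp
    hence "weighted_sum \<theta> n (\<lambda>r. (if r j = Suc b then 1 else 0) * \<Psi> r) = weighted_sum \<theta> n (\<lambda>r. 0)"
      by (intro weighted_sum_cong) simp
    moreover have "j \<le> j * Suc b" by simp
    hence "\<not> j * Suc b \<le> n" using False by linarith
    ultimately show ?thesis by (simp add: weighted_sum_def type_sum_def)
  next
    case True
    let ?Z = "weighted_sum (\<theta>(j := 0)) (n - j * Suc b) (\<lambda>r. \<Psi> (add_cycles r j (Suc b)))"
    have "(\<lambda>r. \<Psi> (add_cycles (add_cycles r j b) j 1)) = (\<lambda>r. \<Psi> (add_cycles r j (Suc b)))"
      by (simp add: add_cycles_def)
    moreover have "n - j - j * b = n - j * Suc b" by (simp add: diff_diff_left)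
    moreover have "(j * b \<le> n - j) = (j * Suc b \<le> n)" using True by auto
    ultimately have IH: "weighted_sum \<theta> (n - j) (\<lambda>r. (if r j = b then 1 else 0) * \<Psi> (add_cycles r j 1)) =
      (if j * Suc b \<le> n then (\<theta> j / j) ^ b / fact b * (fact (n - j) / fact (n - j * Suc b)) * ?Z else 0)"
      using Suc.IH[of "n - j" "\<lambda>r. \<Psi> (add_cycles r j 1)"] by simp
    have alg: "t * (F / (G * real j)) / Suc b * ((t / j) ^ b / fact b * (G / H) * Z) =
          (t / j) ^ Suc b / fact (Suc b) * (F / H) * Z" if "G \<noteq> 0" "H \<noteq> 0" for t F G H Z :: real
      using that j by (simp add: field_simps del: of_nat_Suc)
    show ?thesis
    proof (cases "j * Suc b \<le> n")
      case False
      thus ?thesis unfolding weighted_sum_mark_count_step[OF j True] IH by simp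
    next
      case fits: True
      have "weighted_sum \<theta> n (\<lambda>r. (if r j = Suc b then 1 else 0) * \<Psi> r) =
        \<theta> j * (fact n / (fact (n - j) * real j)) / Suc b *
        ((\<theta> j / j) ^ b / fact b * (fact (n - j) / fact (n - j * Suc b)) * ?Z)"
        unfolding weighted_sum_mark_count_step[OF j True] IH using fits by simp
      also have "\<dots> = (\<theta> j / j) ^ Suc b / fact (Suc b) * (fact n / fact (n - j * Suc b)) * ?Z"
        by (rule alg) simp_all
      finally show ?thesis using fits by simp
    qed
  qed
qed

subsection \<open>The joint law of \<open>(R\<^sub>1, \<dots>, R\<^sub>m)\<close>\<close>

definition type_size :: "nat \<Rightarrow> (nat \<Rightarrow> nat) \<Rightarrow> nat" where
  "type_size m a = (\<Sum>i\<in>{1..m}. i * a i)"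

definition poisson_weight :: "(nat \<Rightarrow> real) \<Rightarrow> nat \<Rightarrow> (nat \<Rightarrow> nat) \<Rightarrow> real" where
  "poisson_weight \<theta> m a = (\<Prod>i\<in>{1..m}. (\<theta> i / real i) ^ a i / fact (a i))"

definition zero_upto :: "(nat \<Rightarrow> real) \<Rightarrow> nat \<Rightarrow> (nat \<Rightarrow> real)" where
  "zero_upto \<theta> m = (\<lambda>i. if i \<in> {1..m} then 0 else \<theta> i)"

definition add_type :: "(nat \<Rightarrow> nat) \<Rightarrow> nat \<Rightarrow> (nat \<Rightarrow> nat) \<Rightarrow> (nat \<Rightarrow> nat)" where
  "add_type r m a = (\<lambda>i. if i \<in> {1..m} then r i + a i else r i)"

lemma zero_upto_Suc: "zero_upto (\<theta>(Suc m := 0)) m = zero_upto \<theta> (Suc m)"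
  by (auto simp: zero_upto_def fun_eq_iff le_Suc_eq)

lemma zero_upto_update: "(zero_upto \<theta> m)(Suc m := 0) = zero_upto \<theta> (Suc m)"
  by (auto simp: zero_upto_def fun_eq_iff le_Suc_eq)

lemma weighted_sum_mark_vector:
  "weighted_sum \<theta> n (\<lambda>r. (if \<forall>i\<in>{1..m}. r i = a i then 1 else 0) * \<Psi> r) =
    (if type_size m a \<le> n then poisson_weight \<theta> m a * (fact n / fact (n - type_size m a)) *
       weighted_sum (zero_upto \<theta> m) (n - type_size m a) (\<lambda>r. \<Psi> (add_type r m a)) else 0)"
proof (induction m arbitrary: \<theta> n \<Psi>)
  case 0
  have "zero_upto \<theta> 0 = \<theta>" "(\<lambda>r. \<Psi> (add_type r 0 a)) = \<Psi>"
    by (simp_all add: zero_upto_def add_type_def)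
  thus ?case by (simp add: type_size_def poisson_weight_def)
next
  case (Suc m)
  let ?j = "Suc m" and ?\<theta>' = "\<theta>(Suc m := 0)" and ?n' = "n - Suc m * a (Suc m)"
  let ?\<Psi>' = "\<lambda>r. \<Psi> (add_cycles r ?j (a ?j))"
  let ?K = "type_size m a" and ?K' = "type_size (Suc m) a"
  have K: "?K' = ?j * a ?j + ?K" by (simp add: type_size_def)
  have C: "poisson_weight \<theta> (Suc m) a = poisson_weight \<theta> m a * ((\<theta> ?j / ?j) ^ a ?j / fact (a ?j))"
    by (simp add: poisson_weight_def)
  have C': "poisson_weight ?\<theta>' m a = poisson_weight \<theta> m a"
    unfolding poisson_weight_def by (rule prod.cong) auto
  have A: "add_cycles (add_type r m a) ?j (a ?j) = add_type r (Suc m) a" for r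
    by (auto simp: add_cycles_def add_type_def fun_eq_iff)
  have "(\<lambda>r. (if \<forall>i\<in>{1..Suc m}. r i = a i then 1 else 0) * \<Psi> r) =
        (\<lambda>r. (if r ?j = a ?j then 1 else 0) * ((if \<forall>i\<in>{1..m}. r i = a i then 1 else 0) * \<Psi> r))"
    by (auto simp: atLeastAtMostSuc_conv)
  hence "weighted_sum \<theta> n (\<lambda>r. (if \<forall>i\<in>{1..Suc m}. r i = a i then 1 else 0) * \<Psi> r) =
     (if ?j * a ?j \<le> n then ((\<theta> ?j / ?j) ^ a ?j / fact (a ?j)) * (fact n / fact ?n') *
        weighted_sum ?\<theta>' ?n' (\<lambda>r. (if \<forall>i\<in>{1..m}. r i = a i then 1 else 0) * ?\<Psi>' r) else 0)"
    using weighted_sum_mark_count[of ?j \<theta> n "a ?j"] by (simp add: add_cycles_def)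
  also have "\<dots> = (if ?j * a ?j \<le> n then ((\<theta> ?j / ?j) ^ a ?j / fact (a ?j)) * (fact n / fact ?n') *
      (if ?K \<le> ?n' then poisson_weight \<theta> m a * (fact ?n' / fact (n - ?K')) *
         weighted_sum (zero_upto \<theta> (Suc m)) (n - ?K') (\<lambda>r. \<Psi> (add_type r (Suc m) a)) else 0) else 0)"
    unfolding Suc.IH C' A zero_upto_Suc K by (simp add: diff_diff_left)
  finally have X: "weighted_sum \<theta> n (\<lambda>r. (if \<forall>i\<in>{1..Suc m}. r i = a i then 1 else 0) * \<Psi> r) = \<dots>" .
  have alg: "L * (F / G) * (P * (G / H) * W) = P * L * (F / H) * W" if "G \<noteq> 0" for L F G H P W :: real
    using that by (simp add: field_simps)
  show ?case
  proof (cases "?K' \<le> n")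
    case False
    hence "\<not> (?j * a ?j \<le> n \<and> ?K \<le> ?n')" using K by linarith
    thus ?thesis using X False by auto
  next
    case True
    hence "?j * a ?j \<le> n" "?K \<le> ?n'" using K by linarith+
    thus ?thesis unfolding X C using True by (simp add: alg)
  qed
qed

lemma cyc_count_eq: "cyc_count n j \<sigma> = cycle_type {1..n} \<sigma> j"
  unfolding cyc_count_def cycle_type_def cycles_def ..

lemma perm_weight_eq: "perm_weight \<theta> n \<sigma> = type_weight \<theta> n (cycle_type {1..n} \<sigma>)"
  unfolding perm_weight_def type_weight_def cyc_count_eq ..

lemma total_weight: "weighted_sum \<theta> n (\<lambda>_. 1) = fact n * hh \<theta> n"
proof -
  have sum: "weighted_sum \<theta> n (\<lambda>_. 1) = (\<Sum>\<sigma>\<in>{\<sigma>. \<sigma> permutes {1..n}}. perm_weight \<theta> n \<sigma>)"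
    unfolding weighted_sum_def type_sum_def perm_weight_eq by simp
  show ?thesis
  proof (cases "n = 0")
    case True
    have "{\<sigma>. \<sigma> permutes {1..0::nat}} = {id}" by (simp add: permutes_empty)
    thus ?thesis using True unfolding sum hh_def by (simp add: perm_weight_def)
  qed (simp add: sum hh_def)
qed

lemma Pn_nonneg:
  assumes "\<And>j. j \<ge> 1 \<Longrightarrow> \<theta> j \<ge> 0" and "hh \<theta> n > 0"
  shows "Pn \<theta> n \<sigma> \<ge> 0"
  unfolding Pn_def perm_weight_def using assms
  by (intro divide_nonneg_pos prod_nonneg zero_le_power) auto

lemma Pn_sum: "hh \<theta> n > 0 \<Longrightarrow> (\<Sum>\<sigma>\<in>{\<sigma>. \<sigma> permutes {1..n}}. Pn \<theta> n \<sigma>) = 1"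
  using total_weight[of \<theta> n] unfolding Pn_def weighted_sum_def type_sum_def perm_weight_eq
  by (simp add: sum_divide_distrib[symmetric])

lemma cycle_vector_law:
  assumes hpos: "hh \<theta> n > 0" and supp: "\<And>i. i \<notin> {1..m} \<Longrightarrow> a i = 0"
  shows "En \<theta> n (\<lambda>\<sigma>. if cyc_vec m n \<sigma> = a then 1 else 0) =
    (if type_size m a \<le> n
     then poisson_weight \<theta> m a * hh (zero_upto \<theta> m) (n - type_size m a) / hh \<theta> n else 0)"
proof -
  have vec: "(cyc_vec m n \<sigma> = a) = (\<forall>i\<in>{1..m}. cycle_type {1..n} \<sigma> i = a i)" for \<sigma>
    unfolding cyc_vec_def cyc_count_eq using supp by (auto simp: fun_eq_iff)
  have "En \<theta> n (\<lambda>\<sigma>. if cyc_vec m n \<sigma> = a then 1 else 0) =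
     weighted_sum \<theta> n (\<lambda>r. (if \<forall>i\<in>{1..m}. r i = a i then 1 else 0) * 1) / (fact n * hh \<theta> n)"
    unfolding En_def weighted_sum_def type_sum_def Pn_def perm_weight_eq vec sum_divide_distrib
    by (rule sum.cong) auto
  also have "\<dots> = (if type_size m a \<le> n then poisson_weight \<theta> m a * hh (zero_upto \<theta> m) (n - type_size m a) / hh \<theta> n else 0)"
    unfolding weighted_sum_mark_vector total_weight using hpos by auto
  finally show ?thesis .
qed

subsection \<open>Convolution with an exponential series\<close>

text \<open>\<open>exp_conv j x g n\<close> is the \<open>n\<close>-th coefficient of \<open>exp(x z\<^sup>j) \<cdot> \<Sum>\<^sub>k g(k) z\<^sup>k\<close>.
  Removing the \<open>j\<close>-cycles from the model multiplies the generating function of \<open>h\<close> by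
  \<open>exp(-\<theta>\<^sub>j z\<^sup>j / j)\<close>, so these convolutions drive the asymptotic analysis.\<close>

definition exp_conv :: "nat \<Rightarrow> real \<Rightarrow> (nat \<Rightarrow> real) \<Rightarrow> nat \<Rightarrow> real" where
  "exp_conv j x g n = (\<Sum>a\<le>n div j. x ^ a / fact a * g (n - j * a))"

lemma exp_conv_altdef:
  assumes j: "1 \<le> j"
  shows "exp_conv j x g n = (\<Sum>a\<le>n. if j * a \<le> n then x ^ a / fact a * g (n - j * a) else 0)"
proof -
  have "{a\<in>{..n}. j * a \<le> n} = {..n div j}"
    using j by (auto simp: less_eq_div_iff_mult_less_eq mult.commute intro: le_trans[OF _ div_le_dividend])
  thus ?thesis unfolding exp_conv_def by (simp add: sum.inter_filter[symmetric])
qed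

lemma exp_binomial:
  "(\<Sum>a\<le>c. y ^ a / fact a * (x ^ (c - a) / fact (c - a))) = (x + y) ^ c / (fact c :: real)"
proof -
  have "(\<Sum>a\<le>c. y ^ a / fact a * (x ^ (c - a) / fact (c - a))) =
        (\<Sum>a\<le>c. real (c choose a) * y ^ a * x ^ (c - a)) / fact c"
    unfolding sum_divide_distrib by (rule sum.cong[OF refl]) (simp add: binomial_fact field_simps)
  also have "(\<Sum>a\<le>c. real (c choose a) * y ^ a * x ^ (c - a)) = (y + x) ^ c"
    by (rule binomial_ring[symmetric])
  finally show ?thesis by (simp add: add.commute)
qed

lemma div_diff_mult:
  assumes "(a::nat) \<le> n div j" "1 \<le> j"
  shows "(n - j * a) div j = n div j - a"
proof -
  have "j * a \<le> n" using assms by (simp add: less_eq_div_iff_mult_less_eq mult.commute)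
  then obtain m where m: "n = j * a + m" using le_Suc_ex by blast
  thus ?thesis using assms(2) by simp
qed

text \<open>\<open>exp(y z\<^sup>j) \<cdot> exp(x z\<^sup>j) = exp((x+y) z\<^sup>j)\<close> at the level of coefficients.\<close>

lemma exp_conv_compose:
  assumes j: "1 \<le> j"
  shows "exp_conv j y (exp_conv j x g) n = exp_conv j (x + y) g n"
proof -
  define N where "N = n div j"
  have "exp_conv j y (exp_conv j x g) n =
        (\<Sum>a\<le>N. \<Sum>b\<le>N - a. y ^ a / fact a * (x ^ b / fact b * g (n - j * (a + b))))"
    unfolding exp_conv_def N_def[symmetric]
  proof (rule sum.cong[OF refl])
    fix a assume "a \<in> {..N}"
    hence "(n - j * a) div j = N - a" unfolding N_def using div_diff_mult j by simp
    thus "y ^ a / fact a * (\<Sum>b\<le>(n - j * a) div j. x ^ b / fact b * g (n - j * a - j * b)) =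
          (\<Sum>b\<le>N - a. y ^ a / fact a * (x ^ b / fact b * g (n - j * (a + b))))"
      by (simp add: sum_distrib_left diff_diff_left distrib_left)
  qed
  also have "\<dots> = (\<Sum>(a, b)\<in>{(a, b). a + b \<le> N}. y ^ a / fact a * (x ^ b / fact b * g (n - j * (a + b))))"
  proof -
    have "{(a, b). a + b \<le> N} = Sigma {..N} (\<lambda>a. {..N - a})" by auto
    thus ?thesis by (simp add: sum.Sigma)
  qed
  also have "\<dots> = (\<Sum>c\<le>N. \<Sum>a\<le>c. y ^ a / fact a * (x ^ (c - a) / fact (c - a) * g (n - j * c)))"
    using sum.triangle_reindex_eq[of "\<lambda>a b. y ^ a / fact a * (x ^ b / fact b * g (n - j * (a + b)))" N]
    by simp
  also have "\<dots> = (\<Sum>c\<le>N. (x + y) ^ c / fact c * g (n - j * c))"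
    unfolding exp_binomial[symmetric] sum_distrib_right by (simp add: mult.assoc)
  finally show ?thesis unfolding exp_conv_def N_def .
qed

lemma exp_conv_zero: "exp_conv j 0 g n = g n"
proof -
  have "(\<lambda>a. 0 ^ a / fact a * g (n - j * a)) = (\<lambda>a. if a = 0 then g n else 0)"
    by (auto simp: fun_eq_iff power_0_left)
  thus ?thesis unfolding exp_conv_def by (simp only: sum.delta finite_atMost) simp
qed

lemma exp_conv_inverse:
  assumes "1 \<le> j" and "\<And>n. h n = exp_conv j x g n"
  shows "g n = exp_conv j (- x) h n"
proof -
  have "h = exp_conv j x g" using assms(2) by auto
  thus ?thesis using exp_conv_compose[OF assms(1), of "-x" x g n] by (simp add: exp_conv_zero)
qed

lemma exp_sums_real: "(\<lambda>a. (x::real) ^ a / fact a) sums exp x"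
  using exp_converges[of x] by (simp add: divide_inverse mult.commute)

lemma exp_partial_le:
  assumes "(x::real) \<ge> 0" "finite A" shows "(\<Sum>a\<in>A. x ^ a / fact a) \<le> exp x"
  using sum_le_suminf[OF sums_summable[OF exp_sums_real] assms(2)] sums_unique[OF exp_sums_real[of x]]
    assms(1) by simp

lemma exp_conv_bound:
  fixes g h :: "nat \<Rightarrow> real"
  assumes B: "B \<ge> 1" and C: "C \<ge> 0" and hpos: "\<And>n. h n > 0"
    and gb: "\<And>n d. d \<le> n \<Longrightarrow> \<bar>g (n - d)\<bar> \<le> C * B ^ d * h n"
    and dn: "d \<le> n"
  shows "\<bar>exp_conv j x g (n - d)\<bar> \<le> (C * exp (\<bar>x\<bar> * B ^ j)) * B ^ d * h n"
proof -
  let ?q = "\<bar>x\<bar> * B ^ j"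
  have "\<bar>exp_conv j x g (n - d)\<bar> \<le> (\<Sum>a\<le>(n - d) div j. \<bar>x ^ a / fact a * g (n - d - j * a)\<bar>)"
    unfolding exp_conv_def by (rule sum_abs)
  also have "\<dots> \<le> (\<Sum>a\<le>(n - d) div j. C * B ^ d * h n * (?q ^ a / fact a))"
  proof (rule sum_mono)
    fix a assume "a \<in> {..(n - d) div j}"
    hence "j * a \<le> j * ((n - d) div j)" by simp
    also have "\<dots> \<le> n - d" by (rule times_div_less_eq_dividend)
    finally have le: "d + j * a \<le> n" using dn by simp
    have "\<bar>g (n - d - j * a)\<bar> \<le> C * B ^ (d + j * a) * h n"
      using gb[OF le] by (simp add: diff_diff_left)
    hence "\<bar>x ^ a / fact a * g (n - d - j * a)\<bar> \<le> \<bar>x\<bar> ^ a / fact a * (C * B ^ (d + j * a) * h n)"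
      by (simp add: abs_mult power_abs divide_right_mono mult_left_mono)
    also have "\<dots> = C * B ^ d * h n * (?q ^ a / fact a)"
      by (simp add: power_add power_mult_distrib mult.commute mult.left_commute flip: power_mult)
    finally show "\<bar>x ^ a / fact a * g (n - d - j * a)\<bar> \<le> C * B ^ d * h n * (?q ^ a / fact a)" .
  qed
  also have "\<dots> = C * B ^ d * h n * (\<Sum>a\<le>(n - d) div j. ?q ^ a / fact a)"
    by (simp add: sum_distrib_left)
  also have "\<dots> \<le> C * B ^ d * h n * exp ?q"
    by (rule mult_left_mono[OF exp_partial_le]) (use C B hpos[of n] in \<open>auto intro!: less_imp_le\<close>)
  finally show ?thesis by (simp add: mult_ac)
qed

lemma exp_conv_series:
  assumes j: "1 \<le> j" and dn: "d \<le> n"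
  shows "exp_conv j x g (n - d) / c =
    (\<Sum>a. if d + j * a \<le> n then x ^ a / fact a * (g (n - (d + j * a)) / c) else 0)"
proof -
  have iff: "d + j * a \<le> n \<longleftrightarrow> a \<le> (n - d) div j" for a
  proof -
    have "d + j * a \<le> n \<longleftrightarrow> j * a \<le> n - d" using dn by linarith
    thus ?thesis using j by (simp add: less_eq_div_iff_mult_less_eq mult.commute)
  qed
  have "(\<Sum>a. if d + j * a \<le> n then x ^ a / fact a * (g (n - (d + j * a)) / c) else 0) =
        (\<Sum>a\<le>(n - d) div j. if d + j * a \<le> n then x ^ a / fact a * (g (n - (d + j * a)) / c) else 0)"
    by (rule suminf_finite) (use dn iff in auto)
  also have "\<dots> = exp_conv j x g (n - d) / c"
    unfolding exp_conv_def sum_divide_distrib using dn iff by (intro sum.cong refl) (auto simp: diff_diff_left)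
  finally show ?thesis ..
qed

text \<open>If \<open>g(n-d)/h\<^sub>n \<rightarrow> L\<close> for every fixed shift \<open>d\<close>, under the domination above, then
  \<open>(exp_conv j x g)(n-d)/h\<^sub>n \<rightarrow> e\<^sup>x L\<close>: dominated convergence for series (Tannery's theorem).\<close>

lemma exp_conv_limit:
  fixes g h :: "nat \<Rightarrow> real"
  assumes B: "B \<ge> 1" and C: "C \<ge> 0" and hpos: "\<And>n. h n > 0"
    and gb: "\<And>n d. d \<le> n \<Longrightarrow> \<bar>g (n - d)\<bar> \<le> C * B ^ d * h n"
    and gl: "\<And>d. (\<lambda>n. g (n - d) / h n) \<longlonglongrightarrow> L"
    and j: "1 \<le> j"
  shows "(\<lambda>n. exp_conv j x g (n - d) / h n) \<longlonglongrightarrow> exp x * L"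
proof -
  let ?q = "\<bar>x\<bar> * B ^ j"
  define A where "A = (\<lambda>a n. if d + j * a \<le> n then x ^ a / fact a * (g (n - (d + j * a)) / h n) else 0)"
  define M where "M = (\<lambda>a. C * B ^ d * (?q ^ a / fact a))"
  have pw: "B ^ (d + j * a) = B ^ d * (B ^ j) ^ a" "B ^ (d + a * j) = B ^ d * (B ^ j) ^ a" for a
    by (simp_all add: power_add mult.commute flip: power_mult)
  have lim: "(\<lambda>n. A a n) \<longlonglongrightarrow> x ^ a / fact a * L" for a
  proof (rule Lim_transform_eventually)
    show "(\<lambda>n. x ^ a / fact a * (g (n - (d + j * a)) / h n)) \<longlonglongrightarrow> x ^ a / fact a * L"
      by (intro tendsto_mult_left gl)
    show "\<forall>\<^sub>F n in sequentially. x ^ a / fact a * (g (n - (d + j * a)) / h n) = A a n"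
      using eventually_ge_at_top[of "d + j * a"] by eventually_elim (simp add: A_def)
  qed
  have bound: "norm (A a n) \<le> M a" for a n
  proof (cases "d + j * a \<le> n")
    case True
    have "\<bar>g (n - (d + j * a))\<bar> / h n \<le> C * B ^ (d + j * a)"
      using gb[OF True] hpos[of n] by (simp add: divide_le_eq)
    hence "\<bar>x\<bar> ^ a / fact a * (\<bar>g (n - (d + j * a))\<bar> / h n) \<le> \<bar>x\<bar> ^ a / fact a * (C * B ^ (d + j * a))"
      by (rule mult_left_mono) simp
    thus ?thesis using True hpos[of n]
      by (simp add: A_def M_def pw abs_mult power_abs power_mult_distrib mult_ac)
  next
    case False
    thus ?thesis using C B by (simp add: A_def M_def)
  qed
  have "eventually (\<lambda>(a, n). norm (A a n) \<le> M a) (at_top \<times>\<^sub>F sequentially)"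
    using bound by (simp add: always_eventually)
  moreover have "summable M" unfolding M_def by (intro summable_mult sums_summable[OF exp_sums_real])
  ultimately have "(\<lambda>n. suminf (\<lambda>a. A a n)) \<longlonglongrightarrow> suminf (\<lambda>a. x ^ a / fact a * L)"
    using tannerys_theorem[OF lim] by simp
  also have "suminf (\<lambda>a. x ^ a / fact a * L) = exp x * L"
    using sums_unique[OF sums_mult2[OF exp_sums_real[of x], of L]] by simp
  finally have T: "(\<lambda>n. suminf (\<lambda>a. A a n)) \<longlonglongrightarrow> exp x * L" .
  have eq: "suminf (\<lambda>a. A a n) = exp_conv j x g (n - d) / h n" if "d \<le> n" for n
    unfolding A_def using exp_conv_series[OF j that] by simp
  have "\<forall>\<^sub>F n in sequentially. suminf (\<lambda>a. A a n) = exp_conv j x g (n - d) / h n"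
    using eventually_ge_at_top[of d] by eventually_elim (rule eq)
  thus ?thesis using T by (rule Lim_transform_eventually[rotated])
qed

lemma ratio_shift_limit:
  fixes h :: "nat \<Rightarrow> real"
  assumes hpos: "\<And>n. h n > 0" and ratio: "(\<lambda>n. h (n - 1) / h n) \<longlonglongrightarrow> 1"
  shows "(\<lambda>n. h (n - d) / h n) \<longlonglongrightarrow> 1"
proof (induction d)
  case 0
  show ?case using hpos by (simp add: less_imp_neq[symmetric])
next
  case (Suc d)
  have "(\<lambda>n. h (n - d - 1) / h (n - d)) \<longlonglongrightarrow> 1"
    using filterlim_compose[OF ratio filterlim_minus_const_nat_at_top[of d]] by simp
  hence "(\<lambda>n. h (n - d - 1) / h (n - d) * (h (n - d) / h n)) \<longlonglongrightarrow> 1 * 1"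
    by (intro tendsto_mult Suc.IH)
  moreover have "h (n - d - 1) / h (n - d) * (h (n - d) / h n) = h (n - Suc d) / h n" for n
    using hpos[of "n - d"] by (simp add: diff_diff_left)
  ultimately show ?case by (simp only: mult_1)
qed

text \<open>A convergent ratio is bounded, so \<open>h\<^sub>{n-d} \<le> B\<^sup>d h\<^sub>n\<close> for some \<open>B \<ge> 1\<close>.\<close>

lemma ratio_bounded:
  fixes h :: "nat \<Rightarrow> real"
  assumes hpos: "\<And>n. h n > 0" and ratio: "(\<lambda>n. h (n - 1) / h n) \<longlonglongrightarrow> 1"
  obtains B where "B \<ge> 1" "\<And>n. h (n - 1) \<le> B * h n"
proof -
  have "Bseq (\<lambda>n. h (n - 1) / h n)" using ratio by (intro convergent_imp_Bseq convergentI)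
  then obtain K where K: "\<And>n. norm (h (n - 1) / h n) \<le> K" unfolding Bseq_def by blast
  have "h (n - 1) \<le> max 1 K * h n" for n
  proof -
    have "h (n - 1) / h n \<le> K" using K[of n] hpos[of n] hpos[of "n - 1"] by simp
    hence "h (n - 1) / h n \<le> max 1 K" by linarith
    thus ?thesis using hpos[of n] by (simp add: divide_le_eq)
  qed
  thus ?thesis using that[of "max 1 K"] by simp
qed

lemma shift_bound:
  fixes h :: "nat \<Rightarrow> real"
  assumes B: "B \<ge> 1" and step: "\<And>n. h (n - 1) \<le> B * h n"
  shows "h (n - d) \<le> B ^ d * h n"
proof (induction d)
  case (Suc d)
  have "h (n - Suc d) \<le> B * h (n - d)" using step[of "n - d"] by (simp add: diff_diff_left)
  also have "\<dots> \<le> B * (B ^ d * h n)" using Suc.IH B by (intro mult_left_mono) auto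
  finally show ?case by simp
qed simp

subsection \<open>Asymptotics of \<open>h\<close> after removing short cycles\<close>

text \<open>Splitting according to the number of \<open>j\<close>-cycles: the generating function of \<open>h\<close>
  factors as \<open>exp(\<theta>\<^sub>j z\<^sup>j/j)\<close> times that of the model without \<open>j\<close>-cycles.\<close>

lemma hh_convolution:
  assumes j: "1 \<le> j"
  shows "hh \<theta> n = exp_conv j (\<theta> j / j) (hh (\<theta>(j := 0))) n"
proof -
  have "weighted_sum \<theta> n (\<lambda>_. 1) = weighted_sum \<theta> n (\<lambda>r. \<Sum>a\<le>n. (if r j = a then 1 else 0) * 1)"
  proof (rule weighted_sum_cong)
    fix \<sigma> assume "\<sigma> permutes {1..n}"
    hence "cycle_type {1..n} \<sigma> j \<le> n" using cycle_type_le[of "{1..n}" \<sigma> j] by simp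
    thus "type_weight \<theta> n (cycle_type {1..n} \<sigma>) * 1 = type_weight \<theta> n (cycle_type {1..n} \<sigma>) *
          (\<Sum>a\<le>n. (if cycle_type {1..n} \<sigma> j = a then 1 else 0) * 1)" by simp
  qed
  also have "\<dots> = (\<Sum>a\<le>n. weighted_sum \<theta> n (\<lambda>r. (if r j = a then 1 else 0) * 1))"
    by (rule weighted_sum_linear) simp
  also have "\<dots> = (\<Sum>a\<le>n. if j * a \<le> n then fact n * ((\<theta> j / j) ^ a / fact a * hh (\<theta>(j := 0)) (n - j * a)) else 0)"
    by (rule sum.cong[OF refl]) (subst weighted_sum_mark_count[OF j], simp add: total_weight)
  also have "\<dots> = fact n * exp_conv j (\<theta> j / j) (hh (\<theta>(j := 0))) n"
    unfolding exp_conv_altdef[OF j] sum_distrib_left by (rule sum.cong) auto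
  finally show ?thesis by (simp add: total_weight)
qed

definition cycle_mean_sum :: "(nat \<Rightarrow> real) \<Rightarrow> nat \<Rightarrow> real" where
  "cycle_mean_sum \<theta> m = (\<Sum>i\<in>{1..m}. \<theta> i / real i)"

text \<open>With \<open>\<theta>\<^sub>1 = \<dots> = \<theta>\<^sub>k = 0\<close>, the sequence \<open>h'\<close> satisfies \<open>h'\<^sub>{n-d}/h\<^sub>n \<rightarrow> e^{-\<Sum>\<^sub>{i\<le>k} \<theta>\<^sub>i/i}\<close>
  for every fixed \<open>d\<close>, and \<open>h'\<^sub>{n-d}\<close> is dominated by \<open>B\<^sup>d h\<^sub>n\<close>: induction on \<open>k\<close>, removing
  one cycle length at a time by the inverse convolution with \<open>-\<theta>\<^sub>k/k\<close>.\<close>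

lemma zero_upto_asymptotics:
  assumes hpos: "\<And>n. hh \<theta> n > 0" and B: "B \<ge> 1"
    and step: "\<And>n. hh \<theta> (n - 1) \<le> B * hh \<theta> n"
    and shift: "\<And>d. (\<lambda>n. hh \<theta> (n - d) / hh \<theta> n) \<longlonglongrightarrow> 1"
  shows "\<exists>C\<ge>0. (\<forall>n d. d \<le> n \<longrightarrow> \<bar>hh (zero_upto \<theta> k) (n - d)\<bar> \<le> C * B ^ d * hh \<theta> n) \<and>
      (\<forall>d. (\<lambda>n. hh (zero_upto \<theta> k) (n - d) / hh \<theta> n) \<longlonglongrightarrow> exp (- cycle_mean_sum \<theta> k))"
proof (induction k)
  case 0
  have "zero_upto \<theta> 0 = \<theta>" by (simp add: zero_upto_def)
  moreover have "\<bar>hh \<theta> (n - d)\<bar> \<le> 1 * B ^ d * hh \<theta> n" for n d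
    using shift_bound[of B "hh \<theta>", OF B step] hpos[of "n - d"] by simp
  ultimately show ?case using shift by (intro exI[of _ 1]) (simp add: cycle_mean_sum_def)
next
  case (Suc k)
  then obtain C where C: "C \<ge> 0"
    "\<And>n d. d \<le> n \<Longrightarrow> \<bar>hh (zero_upto \<theta> k) (n - d)\<bar> \<le> C * B ^ d * hh \<theta> n"
    "\<And>d. (\<lambda>n. hh (zero_upto \<theta> k) (n - d) / hh \<theta> n) \<longlonglongrightarrow> exp (- cycle_mean_sum \<theta> k)"
    by blast
  let ?q = "\<theta> (Suc k) / Suc k"
  have "hh (zero_upto \<theta> k) n = exp_conv (Suc k) ?q (hh (zero_upto \<theta> (Suc k))) n" for n
    using hh_convolution[of "Suc k" "zero_upto \<theta> k" n] unfolding zero_upto_update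
    by (simp add: zero_upto_def)
  hence inv: "hh (zero_upto \<theta> (Suc k)) n = exp_conv (Suc k) (- ?q) (hh (zero_upto \<theta> k)) n" for n
    by (intro exp_conv_inverse) simp_all
  have "\<bar>hh (zero_upto \<theta> (Suc k)) (n - d)\<bar> \<le> (C * exp (\<bar>- ?q\<bar> * B ^ Suc k)) * B ^ d * hh \<theta> n"
    if "d \<le> n" for n d
    unfolding inv by (rule exp_conv_bound[OF B C(1) hpos C(2) that])
  moreover have "(\<lambda>n. hh (zero_upto \<theta> (Suc k)) (n - d) / hh \<theta> n) \<longlonglongrightarrow> exp (- cycle_mean_sum \<theta> (Suc k))"
    for d
  proof -
    have "exp (- ?q) * exp (- cycle_mean_sum \<theta> k) = exp (- cycle_mean_sum \<theta> (Suc k))"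
      by (simp add: cycle_mean_sum_def exp_add[symmetric])
    moreover have "(\<lambda>n. hh (zero_upto \<theta> (Suc k)) (n - d) / hh \<theta> n) \<longlonglongrightarrow> exp (- ?q) * exp (- cycle_mean_sum \<theta> k)"
      unfolding inv by (rule exp_conv_limit[OF B C(1) hpos C(2) C(3)]) simp_all
    ultimately show ?thesis by simp
  qed
  moreover have "C * exp (\<bar>- ?q\<bar> * B ^ Suc k) \<ge> 0" using C(1) by simp
  ultimately show ?case by blast
qed

lemma pmf_poisson:
  assumes "r \<ge> 0" shows "pmf (poisson r) k = r ^ k / fact k * exp (- r)"
proof (cases "r > 0")
  case True thus ?thesis by (simp add: poisson_def)
next
  case False
  hence "r = 0" using assms by simp
  thus ?thesis by (cases k) (simp_all add: poisson_def)
qed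

lemma pmf_poisson_limit:
  assumes nonneg: "\<And>j. j \<ge> 1 \<Longrightarrow> \<theta> j \<ge> 0"
  shows "pmf (poisson_limit \<theta> m) a =
    (if \<forall>i. i \<notin> {1..m} \<longrightarrow> a i = 0 then poisson_weight \<theta> m a * exp (- cycle_mean_sum \<theta> m) else 0)"
proof -
  have "(\<Prod>j\<in>{1..m}. pmf (poisson (\<theta> j / real j)) (a j)) =
        (\<Prod>j\<in>{1..m}. (\<theta> j / real j) ^ a j / fact (a j) * exp (- (\<theta> j / real j)))"
    using nonneg by (intro prod.cong refl pmf_poisson) auto
  also have "\<dots> = poisson_weight \<theta> m a * (\<Prod>j\<in>{1..m}. exp (- (\<theta> j / real j)))"
    unfolding poisson_weight_def by (rule prod.distrib)
  also have "(\<Prod>j\<in>{1..m}. exp (- (\<theta> j / real j))) = exp (- cycle_mean_sum \<theta> m)"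
    unfolding cycle_mean_sum_def by (simp add: exp_sum[symmetric] sum_negf)
  finally have "(\<Prod>j\<in>{1..m}. pmf (poisson (\<theta> j / real j)) (a j)) =
    poisson_weight \<theta> m a * exp (- cycle_mean_sum \<theta> m)" .
  thus ?thesis unfolding poisson_limit_def pmf_Pi[OF finite_atLeastAtMost] by (simp only:)
qed

lemma cycle_vector_law_limit:
  assumes nonneg: "\<And>j. j \<ge> 1 \<Longrightarrow> \<theta> j \<ge> 0" and hpos: "\<And>n. hh \<theta> n > 0"
    and ratio: "(\<lambda>n. hh \<theta> (n - 1) / hh \<theta> n) \<longlonglongrightarrow> 1"
  shows "(\<lambda>n. En \<theta> n (\<lambda>\<sigma>. if cyc_vec m n \<sigma> = a then 1 else 0)) \<longlonglongrightarrow> pmf (poisson_limit \<theta> m) a"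
proof -
  have pmf_eq: "pmf (poisson_limit \<theta> m) a = (if \<forall>i. i \<notin> {1..m} \<longrightarrow> a i = 0
      then poisson_weight \<theta> m a * exp (- cycle_mean_sum \<theta> m) else 0)"
    using nonneg by (rule pmf_poisson_limit)
  show ?thesis
  proof (cases "\<forall>i. i \<notin> {1..m} \<longrightarrow> a i = 0")
    case False
    hence "cyc_vec m n \<sigma> \<noteq> a" for n \<sigma> by (auto simp: cyc_vec_def)
    moreover have "pmf (poisson_limit \<theta> m) a = 0" unfolding pmf_eq by (rule if_not_P[OF False])
    ultimately show ?thesis by (simp add: En_def)
  next
    case supp: True
    let ?K = "type_size m a"
    obtain B where B: "B \<ge> 1" "\<And>n. hh \<theta> (n - 1) \<le> B * hh \<theta> n"
      using ratio_bounded[OF hpos ratio] by blast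
    have "\<forall>d. (\<lambda>n. hh (zero_upto \<theta> m) (n - d) / hh \<theta> n) \<longlonglongrightarrow> exp (- cycle_mean_sum \<theta> m)"
      using zero_upto_asymptotics[OF hpos B ratio_shift_limit[OF hpos ratio], of m] by blast
    hence lim: "(\<lambda>n. poisson_weight \<theta> m a * (hh (zero_upto \<theta> m) (n - ?K) / hh \<theta> n))
             \<longlonglongrightarrow> poisson_weight \<theta> m a * exp (- cycle_mean_sum \<theta> m)"
      by (intro tendsto_mult_left) blast
    have law: "En \<theta> n (\<lambda>\<sigma>. if cyc_vec m n \<sigma> = a then 1 else 0) =
        poisson_weight \<theta> m a * (hh (zero_upto \<theta> m) (n - ?K) / hh \<theta> n)" if "?K \<le> n" for n
      using hpos supp that by (subst cycle_vector_law) auto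
    have "\<forall>\<^sub>F n in sequentially. poisson_weight \<theta> m a * (hh (zero_upto \<theta> m) (n - ?K) / hh \<theta> n) =
        En \<theta> n (\<lambda>\<sigma>. if cyc_vec m n \<sigma> = a then 1 else 0)"
      using eventually_ge_at_top[of ?K] by eventually_elim (rule law[symmetric])
    moreover have "poisson_weight \<theta> m a * exp (- cycle_mean_sum \<theta> m) = pmf (poisson_limit \<theta> m) a"
      unfolding pmf_eq by (rule if_P[OF supp, symmetric])
    ultimately show ?thesis using Lim_transform_eventually[OF lim] by simp
  qed
qed

subsection \<open>From convergence of probabilities to convergence of expectations\<close>

lemma pmf_finite_mass:
  fixes \<mu> :: "'a pmf"
  assumes e: "e > 0"
  obtains T where "finite T" "1 - (\<Sum>a\<in>T. pmf \<mu> a) < e"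
proof -
  define T where "T N = from_nat_into (set_pmf \<mu>) ` {..N}" for N :: nat
  have "incseq T" unfolding T_def incseq_def by auto
  hence "(\<lambda>N. measure \<mu> (T N)) \<longlonglongrightarrow> measure \<mu> (\<Union>N. T N)"
    by (intro measure_pmf.finite_Lim_measure_incseq) auto
  also have "(\<Union>N. T N) = range (from_nat_into (set_pmf \<mu>))" unfolding T_def by auto
  also have "\<dots> = set_pmf \<mu>" by (simp add: set_pmf_not_empty)
  also have "measure \<mu> (set_pmf \<mu>) = 1"
    by (subst measure_pmf.prob_eq_1) (auto simp: AE_measure_pmf)
  finally have "eventually (\<lambda>N. dist (measure \<mu> (T N)) 1 < e) sequentially"
    using e by (simp add: tendsto_iff)
  then obtain N where "dist (measure \<mu> (T N)) 1 < e" by (auto simp: eventually_sequentially)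
  moreover have "finite (T N)" by (simp add: T_def)
  ultimately show ?thesis using that[of "T N"] by (simp add: measure_measure_pmf_finite dist_real_def)
qed

lemma average_truncation:
  fixes w :: "'i \<Rightarrow> real" and v :: "'i \<Rightarrow> 'a" and f :: "'a \<Rightarrow> real"
  assumes I: "finite I" and w: "\<And>i. i \<in> I \<Longrightarrow> w i \<ge> 0" and w1: "(\<Sum>i\<in>I. w i) = 1"
    and fb: "\<And>x. \<bar>f x\<bar> \<le> K" and T: "finite T"
  defines "p \<equiv> \<lambda>a. \<Sum>i\<in>I. w i * (if v i = a then 1 else 0)"
  shows "\<bar>(\<Sum>i\<in>I. w i * f (v i)) - (\<Sum>a\<in>T. f a * p a)\<bar> \<le> K * (1 - (\<Sum>a\<in>T. p a))"
proof -
  have restrict: "(\<Sum>a\<in>T. g a * p a) = (\<Sum>i\<in>I. w i * (if v i \<in> T then g (v i) else 0))" for g :: "'a \<Rightarrow> real"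
  proof -
    have "(\<Sum>a\<in>T. g a * p a) = (\<Sum>i\<in>I. w i * (\<Sum>a\<in>T. g a * (if v i = a then 1 else 0)))"
      unfolding p_def by (simp add: sum_distrib_left sum_distrib_right mult_ac sum.swap[of _ T])
    thus ?thesis using T by (simp add: if_distrib sum.delta' cong: if_cong)
  qed
  have "\<bar>(\<Sum>i\<in>I. w i * f (v i)) - (\<Sum>i\<in>I. w i * (if v i \<in> T then f (v i) else 0))\<bar> =
        \<bar>\<Sum>i\<in>I. w i * (if v i \<in> T then 0 else f (v i))\<bar>"
    by (simp add: sum_subtractf[symmetric] right_diff_distrib[symmetric] if_distrib cong: if_cong)
  also have "\<dots> \<le> (\<Sum>i\<in>I. \<bar>w i * (if v i \<in> T then 0 else f (v i))\<bar>)" by (rule sum_abs)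
  also have "\<dots> \<le> (\<Sum>i\<in>I. w i * (K * (1 - (if v i \<in> T then 1 else 0))))"
    using w fb by (intro sum_mono) (auto simp: abs_mult intro: mult_left_mono)
  also have "\<dots> = K * (1 - (\<Sum>i\<in>I. w i * (if v i \<in> T then 1 else 0)))"
    using w1 by (simp add: right_diff_distrib sum_subtractf mult_ac flip: sum_distrib_left)
  finally show ?thesis using restrict[of f] restrict[of "\<lambda>_. 1"] by simp
qed

lemma expectation_truncation:
  fixes f :: "'a \<Rightarrow> real" and \<mu> :: "'a pmf"
  assumes fb: "\<And>x. \<bar>f x\<bar> \<le> K" and T: "finite T"
  shows "\<bar>measure_pmf.expectation \<mu> f - (\<Sum>a\<in>T. f a * pmf \<mu> a)\<bar> \<le> K * (1 - (\<Sum>a\<in>T. pmf \<mu> a))"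
proof -
  have K: "K \<ge> 0" using fb[of undefined] by linarith
  have int: "integrable \<mu> (\<lambda>x. f x * indicator A x)" for A
    by (rule measure_pmf.integrable_const_bound[where B=K]) (use fb K in \<open>auto split: split_indicator\<close>)
  have "measure_pmf.expectation \<mu> (\<lambda>x. f x * indicator T x) = (\<Sum>a\<in>T. f a * pmf \<mu> a)"
    by (subst integral_measure_pmf_real[OF T]) (auto simp: indicator_def)
  moreover have "measure_pmf.expectation \<mu> f =
      measure_pmf.expectation \<mu> (\<lambda>x. f x * indicator T x) + measure_pmf.expectation \<mu> (\<lambda>x. f x * indicator (- T) x)"
    by (subst Bochner_Integration.integral_add[OF int int, symmetric]) (auto intro: Bochner_Integration.integral_cong split: split_indicator)
  moreover have "\<bar>measure_pmf.expectation \<mu> (\<lambda>x. f x * indicator (- T) x)\<bar> \<le> K * measure \<mu> (- T)"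
  proof -
    have "\<bar>measure_pmf.expectation \<mu> (\<lambda>x. f x * indicator (- T) x)\<bar> \<le>
          measure_pmf.expectation \<mu> (\<lambda>x. norm (f x * indicator (- T) x))"
      using integral_norm_bound by (metis real_norm_def)
    also have "\<dots> \<le> measure_pmf.expectation \<mu> (\<lambda>x. K * indicator (- T) x)"
    proof (rule integral_mono)
      show "integrable \<mu> (\<lambda>x. norm (f x * indicator (- T) x))" using int[of "- T"] by simp
      show "integrable \<mu> (\<lambda>x. K * indicator (- T) x)"
        by (rule measure_pmf.integrable_const_bound[where B="\<bar>K\<bar>"]) (auto split: split_indicator)
      show "norm (f x * indicator (- T) x) \<le> K * indicator (- T) x" for x
        using fb[of x] by (auto split: split_indicator)
    qed
    finally show ?thesis by simp
  qed
  moreover have "measure \<mu> (- T) = 1 - (\<Sum>a\<in>T. pmf \<mu> a)"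
    using measure_pmf.prob_compl[of T \<mu>] by (simp add: Compl_eq_Diff_UNIV measure_measure_pmf_finite[OF T])
  ultimately show ?thesis by simp
qed

text \<open>Convergence of the mass function at every point implies convergence of the expectation
  of every bounded function: truncate both laws to a finite set carrying almost all of the
  limit mass; on that set the convergence is uniform, and the remaining mass is small for
  both laws.\<close>

lemma expectation_convergence:
  fixes w :: "nat \<Rightarrow> 'i \<Rightarrow> real" and v :: "nat \<Rightarrow> 'i \<Rightarrow> 'a" and f :: "'a \<Rightarrow> real"
  assumes I: "\<And>n. finite (I n)" and w: "\<And>n i. i \<in> I n \<Longrightarrow> w n i \<ge> 0"
    and w1: "\<And>n. (\<Sum>i\<in>I n. w n i) = 1"
    and conv: "\<And>a. (\<lambda>n. \<Sum>i\<in>I n. w n i * (if v n i = a then 1 else 0)) \<longlonglongrightarrow> pmf \<mu> a"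
    and f: "bounded (range f)"
  shows "(\<lambda>n. \<Sum>i\<in>I n. w n i * f (v n i)) \<longlonglongrightarrow> measure_pmf.expectation \<mu> f"
  unfolding tendsto_iff
proof (intro allI impI)
  fix e :: real assume e: "e > 0"
  obtain K where fb: "\<And>x. \<bar>f x\<bar> \<le> K" using f unfolding bounded_iff by auto
  have K: "K \<ge> 0" using fb[of undefined] by linarith
  define p where "p n a = (\<Sum>i\<in>I n. w n i * (if v n i = a then 1 else 0))" for n a
  define \<delta> where "\<delta> = e / (4 * (K + 1))"
  have \<delta>: "\<delta> > 0" using e K by (simp add: \<delta>_def)
  have K\<delta>: "K * \<delta> \<le> e / 4"
  proof -
    have "K * \<delta> = e / 4 * (K / (K + 1))" using K by (simp add: \<delta>_def field_simps)
    also have "\<dots> \<le> e / 4" using e K by (intro mult_left_le) auto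
    finally show ?thesis .
  qed
  obtain T where T: "finite T" "1 - (\<Sum>a\<in>T. pmf \<mu> a) < \<delta>" using pmf_finite_mass[OF \<delta>] by blast
  have "(\<lambda>n. \<Sum>a\<in>T. f a * p n a) \<longlonglongrightarrow> (\<Sum>a\<in>T. f a * pmf \<mu> a)"
    unfolding p_def by (intro tendsto_sum tendsto_mult_left conv)
  hence ev1: "\<forall>\<^sub>F n in sequentially. dist (\<Sum>a\<in>T. f a * p n a) (\<Sum>a\<in>T. f a * pmf \<mu> a) < e / 4"
    by (rule tendstoD) (use e in simp)
  have "(\<lambda>n. \<Sum>a\<in>T. p n a) \<longlonglongrightarrow> (\<Sum>a\<in>T. pmf \<mu> a)"
    unfolding p_def by (intro tendsto_sum conv)
  hence ev2: "\<forall>\<^sub>F n in sequentially. dist (\<Sum>a\<in>T. p n a) (\<Sum>a\<in>T. pmf \<mu> a) < \<delta>"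
    using \<delta> by (rule tendstoD)
  show "\<forall>\<^sub>F n in sequentially. dist (\<Sum>i\<in>I n. w n i * f (v n i)) (measure_pmf.expectation \<mu> f) < e"
    using ev1 ev2
  proof eventually_elim
    case (elim n)
    have "\<bar>(\<Sum>i\<in>I n. w n i * f (v n i)) - (\<Sum>a\<in>T. f a * p n a)\<bar> \<le> K * (1 - (\<Sum>a\<in>T. p n a))"
      unfolding p_def by (rule average_truncation[OF I w w1 fb T(1)])
    moreover have "\<bar>measure_pmf.expectation \<mu> f - (\<Sum>a\<in>T. f a * pmf \<mu> a)\<bar> \<le> K * (1 - (\<Sum>a\<in>T. pmf \<mu> a))"
      by (rule expectation_truncation[OF fb T(1)])
    moreover have "K * (1 - (\<Sum>a\<in>T. p n a)) \<le> K * (2 * \<delta>)"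
      using elim(2) T(2) K by (intro mult_left_mono) (auto simp: dist_real_def)
    moreover have "K * (1 - (\<Sum>a\<in>T. pmf \<mu> a)) \<le> K * \<delta>"
      using T(2) K by (intro mult_left_mono) auto
    ultimately show ?case using elim(1) K\<delta> unfolding dist_real_def by linarith
  qed
qed

theorem corollary2p2:
  fixes \<theta> :: "nat \<Rightarrow> real"
  assumes nonneg: "\<And>j. j \<ge> 1 \<Longrightarrow> \<theta> j \<ge> 0"
    and hpos: "\<And>n. hh \<theta> n > 0"
    and ratio: "(\<lambda>n. hh \<theta> (n - 1) / hh \<theta> n) \<longlonglongrightarrow> 1"
  shows "\<forall>m. \<forall>f :: (nat \<Rightarrow> nat) \<Rightarrow> real. bounded (range f) \<longrightarrow>
           (\<lambda>n. En \<theta> n (\<lambda>\<sigma>. f (cyc_vec m n \<sigma>)))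
             \<longlonglongrightarrow> measure_pmf.expectation (poisson_limit \<theta> m) f"
proof (intro allI impI)
  fix m and f :: "(nat \<Rightarrow> nat) \<Rightarrow> real"
  assume f: "bounded (range f)"
  have law: "(\<lambda>n. \<Sum>\<sigma>\<in>{\<sigma>. \<sigma> permutes {1..n}}. Pn \<theta> n \<sigma> * (if cyc_vec m n \<sigma> = a then 1 else 0))
      \<longlonglongrightarrow> pmf (poisson_limit \<theta> m) a" for a
    using nonneg hpos ratio unfolding En_def[symmetric] by (rule cycle_vector_law_limit)
  show "(\<lambda>n. En \<theta> n (\<lambda>\<sigma>. f (cyc_vec m n \<sigma>))) \<longlonglongrightarrow> measure_pmf.expectation (poisson_limit \<theta> m) f"
    unfolding En_def
  proof (rule expectation_convergence[OF _ _ _ law f])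
    show "finite {\<sigma>. \<sigma> permutes {1..n}}" for n :: nat by (rule finite_permutations) simp
    show "Pn \<theta> n \<sigma> \<ge> 0" for n \<sigma> using nonneg hpos by (rule Pn_nonneg)
    show "(\<Sum>\<sigma>\<in>{\<sigma>. \<sigma> permutes {1..n}}. Pn \<theta> n \<sigma>) = 1" for n using hpos by (rule Pn_sum)
  qed
qed

end
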